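(* Let $\sigma>0$, let $f:[0,\sigma]\to[0,\infty)$ be an excursion function, and let $N$ and $(s_i,i\le N)$ be the random number and times of the backward identification construction described in the context. Then for each $n\ge0$ and $0<t_1<\dots<t_n<\sigma$, \begin{align*} &\mathbb{P}[N=n,\ s_i\in dt_i\ \forall i\le n]=\prod_{k=1}^n\Big(\sum_{i=1}^k\big(f(t_i)-\hat f(t_{i-1},t_i)\big)\Big)\\ &\qquad\times\exp\Big(-\int_0^\sigma\Big(f(t)-\hat f(t_{I(t)},t)+\sum_{i=1}^{I(t)}\big(f(t_i)-\hat f(t_{i-1},t_i)\big)\Big)dt\Big)\,dt_1\cdots dt_n, \end{align*} where $t_0=0$ and $I(t)=\max\{i:t_i<t\}$ for $t\in[0,\sigma]$.
   Context: An excursion function is a continuous $f:[0,\sigma]\to[0,\infty)$ with $f(x)=0$ iff $x\in\{0,\sigma\}$; $\hat f(x,y)=\min\{f(s):s$ between $x$ and $y\}$. The tree $\mathcal T_f=[0,\sigma]/\{d_f=0\}$, $d_f(x,y)=f(x)+f(y)-2\hat f(x,y)$, has projection $p_f$ and root $\rho=p_f(0)$. Construction: $s_1$ is the first point of a Poisson process on $[0,\sigma]$ with intensity $f(t)dt$ (if none, $N=0$), $x_1=p_f(s_1)$. Given $s_1,\dots,s_i$ (and $s_0=0$), for $t\in[s_i,\sigma]$ let $\ell_i(t)=\sum_{j=1}^i(f(s_j)-\hat f(s_{j-1},s_j))+f(t)-\hat f(s_i,t)$ (the length of $\bigcup_{j\le i}[[\rho,p_f(s_j)]]\cup[[\rho,p_f(t)]]$);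 $s_{i+1}$ is the first point of an independent Poisson process on $[s_i,\sigma]$ with intensity $\ell_i(t)dt$, and if this process has no points then $N=i$. *)

theory Defs
  imports "HOL-Probability.Probability"
begin

definition excursion :: "real \<Rightarrow> (real \<Rightarrow> real) \<Rightarrow> bool" where
  "excursion \<sigma> f \<longleftrightarrow> continuous_on {0..\<sigma>} f \<and> (\<forall>x\<in>{0..\<sigma>}. 0 \<le> f x)
     \<and> (\<forall>x\<in>{0..\<sigma>}. f x = 0 \<longleftrightarrow> x = 0 \<or> x = \<sigma>)"

definition fhat :: "(real \<Rightarrow> real) \<Rightarrow> real \<Rightarrow> real \<Rightarrow> real" where
  "fhat f x y = Inf (f ` {min x y..max x y})"

text \<open>First point of a Poisson process on [a,b] with intensity lam(t)dt, realised by
  the time change of a standard exponential variable e: the first time the cumulative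
  intensity reaches e; None if the process has no point in [a,b].\<close>
definition first_point :: "(real \<Rightarrow> real) \<Rightarrow> real \<Rightarrow> real \<Rightarrow> real \<Rightarrow> real option" where
  "first_point lam a b e =
     (if \<exists>t\<in>{a..b}. e \<le> integral {a..t} lam
      then Some (Inf {t\<in>{a..b}. e \<le> integral {a..t} lam}) else None)"

text \<open>State after step i: Some (s_i, L_i) with
  L_i = sum_{j<=i} (f s_j - fhat f s_{j-1} s_j), so that
  ell_i(t) = L_i + f t - fhat f s_i t; None if the construction has stopped (N < i).\<close>
primrec bi_state :: "(real \<Rightarrow> real) \<Rightarrow> real \<Rightarrow> (nat \<Rightarrow> real) \<Rightarrow> nat \<Rightarrow> (real \<times> real) option" where
  "bi_state f \<sigma> e 0 = Some (0, 0)"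
| "bi_state f \<sigma> e (Suc i) =
     (case bi_state f \<sigma> e i of
        None \<Rightarrow> None
      | Some (a, L) \<Rightarrow>
          map_option (\<lambda>s. (s, L + f s - fhat f a s))
            (first_point (\<lambda>t. L + f t - fhat f a t) a \<sigma> (e (Suc i))))"

definition bi_time :: "(real \<Rightarrow> real) \<Rightarrow> real \<Rightarrow> (nat \<Rightarrow> real) \<Rightarrow> nat \<Rightarrow> real" where
  "bi_time f \<sigma> e i = fst (the (bi_state f \<sigma> e i))"

definition bi_N :: "(real \<Rightarrow> real) \<Rightarrow> real \<Rightarrow> (nat \<Rightarrow> real) \<Rightarrow> nat" where
  "bi_N f \<sigma> e = (LEAST i. bi_state f \<sigma> e (Suc i) = None)"

definition tt :: "(nat \<Rightarrow> real) \<Rightarrow> nat \<Rightarrow> real" where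
  "tt t i = (if i = 0 then 0 else t i)"

definition incr :: "(real \<Rightarrow> real) \<Rightarrow> (nat \<Rightarrow> real) \<Rightarrow> nat \<Rightarrow> real" where
  "incr f t i = f (tt t i) - fhat f (tt t (i - 1)) (tt t i)"

definition Ifun :: "(nat \<Rightarrow> real) \<Rightarrow> nat \<Rightarrow> real \<Rightarrow> nat" where
  "Ifun t n x = Max ({0} \<union> {i\<in>{1..n}. t i < x})"

definition bi_density :: "(real \<Rightarrow> real) \<Rightarrow> real \<Rightarrow> nat \<Rightarrow> (nat \<Rightarrow> real) \<Rightarrow> real" where
  "bi_density f \<sigma> n t =
     (\<Prod>k=1..n. \<Sum>i=1..k. incr f t i) *
     exp (- integral {0..\<sigma>} (\<lambda>x. f x - fhat f (tt t (Ifun t n x)) x + (\<Sum>i=1..Ifun t n x. incr f t i)))"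

definition ordered_times :: "real \<Rightarrow> nat \<Rightarrow> (nat \<Rightarrow> real) set" where
  "ordered_times \<sigma> n = {t. (\<forall>i\<in>{1..n}. 0 < t i \<and> t i < \<sigma>) \<and> (\<forall>i\<in>{1..<n}. t i < t (Suc i))}"

end

theory Submission
  imports Defs
begin

text \<open>Drive the \<open>i\<close>-th Poisson process by a standard exponential variable \<open>x\<close>: its first point
  is the first time \<open>t\<close> at which \<open>\<Lambda>\<^sub>i(t) = \<integral>\<^sub>s\<^sub>i\<^sup>t \<ell>\<^sub>i\<close> reaches \<open>x\<close>, and there is none if
  \<open>x > \<Lambda>\<^sub>i(\<sigma>)\<close>. So the construction is a Markov chain on the states \<open>(s\<^sub>i, L\<^sub>i)\<close>, \<open>L\<^sub>i\<close> the
  length of the tree spanned so far, which dies once it jumps past \<open>\<sigma>\<close>. Conditioning on the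
  first variable and substituting \<open>x = \<Lambda>\<^sub>i(t)\<close>, the next point has density
  \<open>\<ell>\<^sub>i(t) exp (-\<Lambda>\<^sub>i(t))\<close> on \<open>(s\<^sub>i, \<sigma>)\<close> and the chain dies with probability
  \<open>exp (-\<Lambda>\<^sub>i(\<sigma>))\<close>. By induction on \<open>n\<close> the joint density is the product of these factors, and
  the exponents add up to the single integral over \<open>[0, \<sigma>]\<close>. As \<open>f\<close> is bounded, the chain dies
  almost surely, so the event on which \<open>N\<close> is undefined is null.\<close>

section \<open>Running minima\<close>

lemma fhat_self [simp]: "fhat g a a = g a"
  by (simp add: fhat_def)

lemma fhat_cong:
  "(\<And>z. z \<in> {min a x..max a x} \<Longrightarrow> g z = g' z) \<Longrightarrow> fhat g a x = fhat g' a x"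
  unfolding fhat_def by (metis image_cong)

lemma fhat_attains_min:
  assumes "continuous_on {min a x..max a x} g"
  obtains y where "y \<in> {min a x..max a x}" "fhat g a x = g y"
    "\<And>z. z \<in> {min a x..max a x} \<Longrightarrow> g y \<le> g z"
proof -
  obtain y where y: "y \<in> {min a x..max a x}" "\<forall>z\<in>{min a x..max a x}. g y \<le> g z"
    using continuous_attains_inf[OF _ _ assms] by fastforce
  then have "fhat g a x = g y"
    unfolding fhat_def by (intro cInf_eq_minimum) auto
  with y that show ?thesis by blast
qed

lemma fhat_le:
  "continuous_on {min a x..max a x} g \<Longrightarrow> z \<in> {min a x..max a x} \<Longrightarrow> fhat g a x \<le> g z"
  by (metis fhat_attains_min)

lemma exists_close_point_between:
  fixes a x a' x' y d :: real
  assumes "\<bar>a - a'\<bar> < d" "\<bar>x - x'\<bar> < d" "y \<in> {min a x..max a x}"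
  obtains y' where "y' \<in> {min a' x'..max a' x'}" "\<bar>y' - y\<bar> < d"
proof
  let ?y' = "max (min a' x') (min (max a' x') y)"
  show "?y' \<in> {min a' x'..max a' x'}" by auto
  show "\<bar>?y' - y\<bar> < d"
    using assms by (cases "a \<le> x"; cases "a' \<le> x'") (auto simp: abs_less_iff min_def max_def)
qed

lemma fhat_upper_semicontinuous_uniform:
  assumes g: "uniformly_continuous_on UNIV g" and "e > 0"
  obtains d where "d > 0"
    "\<And>a x a' x'. \<bar>a - a'\<bar> < d \<Longrightarrow> \<bar>x - x'\<bar> < d \<Longrightarrow> fhat g a' x' \<le> fhat g a x + e"
proof -
  have cont: "continuous_on S g" for S
    using uniformly_continuous_imp_continuous[OF g] continuous_on_subset by blast
  obtain d where d: "d > 0" "\<And>y y'. dist y' y < d \<Longrightarrow> dist (g y') (g y) < e"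
    using g \<open>e > 0\<close> unfolding uniformly_continuous_on_def by blast
  show ?thesis
  proof (rule that[OF d(1)])
    fix a x a' x' :: real assume close: "\<bar>a - a'\<bar> < d" "\<bar>x - x'\<bar> < d"
    obtain y where y: "y \<in> {min a x..max a x}" "fhat g a x = g y"
      using fhat_attains_min[OF cont] by metis
    obtain y' where y': "y' \<in> {min a' x'..max a' x'}" "\<bar>y' - y\<bar> < d"
      using exists_close_point_between[OF close y(1)] by metis
    have "g y' < g y + e"
      using d(2)[of y' y] y'(2) by (simp add: dist_real_def)
    then show "fhat g a' x' \<le> fhat g a x + e"
      using fhat_le[OF cont y'(1)] y(2) by linarith
  qed
qed

lemma continuous_on_fhat:
  assumes "uniformly_continuous_on UNIV g"
  shows "continuous_on UNIV (\<lambda>z. fhat g (fst z) (snd z))"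
proof -
  have "uniformly_continuous_on UNIV (\<lambda>z. fhat g (fst z) (snd z))"
    unfolding uniformly_continuous_on_def
  proof (intro allI impI)
    fix e :: real assume "e > 0"
    then obtain d where d: "d > 0"
      "\<And>a x a' x'. \<bar>a - a'\<bar> < d \<Longrightarrow> \<bar>x - x'\<bar> < d \<Longrightarrow> fhat g a' x' \<le> fhat g a x + e / 2"
      using fhat_upper_semicontinuous_uniform[OF assms, of "e / 2"] by auto
    show "\<exists>d>0. \<forall>z\<in>UNIV. \<forall>z'\<in>UNIV. dist z' z < d \<longrightarrow>
        dist (fhat g (fst z') (snd z')) (fhat g (fst z) (snd z)) < e"
    proof (intro exI[of _ d] conjI ballI impI)
      fix z z' :: "real \<times> real" assume "dist z' z < d"
      then have "\<bar>fst z - fst z'\<bar> < d" "\<bar>snd z - snd z'\<bar> < d"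
        by (metis dist_commute dist_fst_le dist_snd_le dist_real_def le_less_trans)+
      then have "fhat g (fst z') (snd z') \<le> fhat g (fst z) (snd z) + e / 2"
        "fhat g (fst z) (snd z) \<le> fhat g (fst z') (snd z') + e / 2"
        using d(2) by (auto simp: abs_minus_commute)
      then show "dist (fhat g (fst z') (snd z')) (fhat g (fst z) (snd z)) < e"
        using \<open>e > 0\<close> by (simp add: dist_real_def)
    qed (fact d(1))
  qed
  then show ?thesis
    by (rule uniformly_continuous_imp_continuous)
qed

lemma Least_not_Suc_eq_iff:
  fixes P :: "nat \<Rightarrow> bool"
  assumes down: "\<And>i. P (Suc i) \<Longrightarrow> P i" and "P 0" and "\<exists>i. \<not> P i"
  shows "(LEAST i. \<not> P (Suc i)) = n \<longleftrightarrow> P n \<and> \<not> P (Suc n)"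
proof
  obtain i where "\<not> P i"
    using assms(3) by blast
  with \<open>P 0\<close> have ex: "\<exists>i. \<not> P (Suc i)"
    by (cases i) auto
  assume n: "(LEAST i. \<not> P (Suc i)) = n"
  show "P n \<and> \<not> P (Suc n)"
  proof
    show "\<not> P (Suc n)"
      using LeastI_ex[OF ex] n by simp
    show "P n"
    proof (cases n)
      case (Suc m)
      then show ?thesis
        using not_less_Least[of m "\<lambda>i. \<not> P (Suc i)"] n by auto
    qed (simp add: \<open>P 0\<close>)
  qed
next
  assume "P n \<and> \<not> P (Suc n)"
  moreover have "P (Suc y)" if "P n" "y < n" for y
    using that by (induction n) (auto intro: down simp: less_Suc_eq)
  ultimately show "(LEAST i. \<not> P (Suc i)) = n"
    by (intro Least_equality) (auto simp: not_le[symmetric])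
qed

lemma ordered_times_less:
  assumes "t \<in> ordered_times \<sigma> n" "1 \<le> i" "i < j" "j \<le> n"
  shows "t i < t j"
  using assms(3,4)
proof (induction j)
  case (Suc j)
  then have "t j < t (Suc j)"
    using assms(1,2) by (auto simp: ordered_times_def)
  with Suc show ?case
    by (cases "i = j") auto
qed simp

lemma tt_less: "t \<in> ordered_times \<sigma> n \<Longrightarrow> i < j \<Longrightarrow> j \<le> n \<Longrightarrow> tt t i < tt t j"
  using ordered_times_less[of t \<sigma> n i j] by (cases "i = 0") (auto simp: tt_def ordered_times_def)

lemma tt_le: "t \<in> ordered_times \<sigma> n \<Longrightarrow> i \<le> j \<Longrightarrow> j \<le> n \<Longrightarrow> tt t i \<le> tt t j"
  using tt_less[of t \<sigma> n i j] by (cases "i = j") auto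

lemma tt_bounds:
  assumes "0 < \<sigma>" "t \<in> ordered_times \<sigma> n" "i \<le> n"
  shows "0 \<le> tt t i \<and> tt t i < \<sigma>"
proof (cases "i = 0")
  case False
  with assms(3) have "i \<in> {1..n}"
    by simp
  with assms(2) have "0 < t i \<and> t i < \<sigma>"
    unfolding ordered_times_def by blast
  with False show ?thesis
    by (simp add: tt_def)
qed (simp add: tt_def assms(1))

lemma Ifun_eqI:
  assumes t: "t \<in> ordered_times \<sigma> n" and "m \<le> n" "tt t m < x" "m < n \<Longrightarrow> x \<le> t (Suc m)"
  shows "Ifun t n x = m"
proof -
  have "i \<le> m" if "i \<in> {1..n}" "t i < x" for i
  proof (rule ccontr)
    assume "\<not> i \<le> m"
    then have "tt t (Suc m) \<le> tt t i"
      using tt_le[OF t, of "Suc m" i] that by auto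
    then show False
      using assms(4) that \<open>\<not> i \<le> m\<close> by (auto simp: tt_def)
  qed
  moreover have "t i < x" if "i \<in> {1..m}" for i
    using tt_le[OF t, of i m] that assms(2,3) by (auto simp: tt_def)
  ultimately have "{0} \<union> {i \<in> {1..n}. t i < x} = insert 0 {1..m}"
    using assms(2) by auto
  moreover have "Max (insert 0 {1..m}) = m"
    by (rule Max_eqI) auto
  ultimately show ?thesis
    by (simp add: Ifun_def)
qed

section \<open>Product measures and exponential streams\<close>

lemma measurable_fun_upd_PiM:
  "(\<lambda>z. (snd z)(i := fst z)) \<in> measurable (M i \<Otimes>\<^sub>M PiM J M) (PiM (insert i J) M)"
proof -
  have "(\<lambda>z. (snd z, fst z)) \<in> measurable (M i \<Otimes>\<^sub>M PiM J M) (PiM J M \<Otimes>\<^sub>M M i)"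
    by measurable
  from measurable_compose[OF this measurable_add_dim] show ?thesis
    by simp
qed

lemma product_sigma_finite_lborel: "product_sigma_finite (\<lambda>_. lborel)"
  by (simp add: product_sigma_finite_def sigma_finite_lborel)

lemma sets_fun_upd_preimage:
  assumes "A \<in> sets (PiM (insert i J) M)" "t \<in> space (M i)"
  shows "{w \<in> space (PiM J M). w(i := t) \<in> A} \<in> sets (PiM J M)"
proof -
  have "(\<lambda>w. (t, w)) \<in> measurable (PiM J M) (M i \<Otimes>\<^sub>M PiM J M)"
    using assms(2) by measurable
  from measurable_compose[OF this measurable_fun_upd_PiM]
  have "(\<lambda>w. w(i := t)) \<in> measurable (PiM J M) (PiM (insert i J) M)"
    by simp
  from measurable_sets[OF this assms(1)] show ?thesis
    by (simp add: vimage_def Int_def conj_commute)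
qed

definition std_exponential :: "real measure" where
  "std_exponential = density lborel (\<lambda>x. ennreal (exponential_density 1 x))"

lemma prob_space_std_exponential: "prob_space std_exponential"
  unfolding std_exponential_def by (rule prob_space_exponential_density) simp

lemma sets_std_exponential [measurable_cong]: "sets std_exponential = sets borel"
  by (simp add: std_exponential_def)

lemma space_std_exponential [simp]: "space std_exponential = UNIV"
  by (simp add: std_exponential_def)

lemma space_stream_space_std_exponential [simp]: "space (stream_space std_exponential) = UNIV"
  by (simp add: space_stream_space)

lemma prob_space_stream_space_std_exponential: "prob_space (stream_space std_exponential)"
  by (rule prob_space.prob_space_stream_space[OF prob_space_std_exponential])

lemma emeasure_std_exponential_greater:
  assumes "0 \<le> c"
  shows "emeasure std_exponential {x. c < x} = ennreal (exp (- c))"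
proof -
  interpret prob_space std_exponential by (rule prob_space_std_exponential)
  have "distributed std_exponential lborel (\<lambda>x. x) (\<lambda>x. ennreal (exponential_density 1 x))"
    by (auto simp: distributed_def distr_id2 sets_std_exponential std_exponential_def)
  then have "\<P>(x in std_exponential. c < x) = exp (- c * 1)"
    by (rule exponential_distributedD_gt[OF _ assms]) simp
  then show ?thesis
    by (simp add: emeasure_eq_measure)
qed

lemma AE_std_exponential: "AE x in std_exponential. 0 < x \<and> x \<noteq> c"
proof -
  have "AE x in lborel. x \<noteq> 0" "AE x in lborel. x \<noteq> c"
    by (rule AE_lborel_singleton)+
  then have "AE x in lborel. 0 < ennreal (exponential_density 1 x) \<longrightarrow> 0 < x \<and> x \<noteq> c"
    by eventually_elim (auto simp: exponential_density_def)
  then show ?thesis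
    unfolding std_exponential_def by (subst AE_density) auto
qed

lemma nn_integral_exp_std_exponential:
  assumes c: "0 < c"
  shows "(\<integral>\<^sup>+x. ennreal (exp (- x / c)) \<partial>std_exponential) = ennreal (c / (c + 1))"
proof -
  define l where "l = 1 + 1 / c"
  have l: "0 < l" using c by (simp add: l_def add_pos_pos)
  have dens: "ennreal (exponential_density 1 x) * ennreal (exp (- x / c))
      = ennreal (1 / l) * ennreal (exponential_density l x)" for x
  proof (cases "x < 0")
    case False
    have "- x * l = - x + - x / c"
      by (simp add: l_def algebra_simps)
    then have "exp (- x * l) = exp (- x) * exp (- x / c)"
      by (simp only: exp_add)
    then have "exp (- x) * exp (- x / c) = 1 / l * (l * exp (- x * l))"
      using l by simp
    then show ?thesis
      using False l by (simp add: exponential_density_def flip: ennreal_mult)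
  qed (simp add: exponential_density_def)
  interpret prob_space "density lborel (\<lambda>x. ennreal (exponential_density l x))"
    by (rule prob_space_exponential_density[OF l])
  have total: "(\<integral>\<^sup>+x. ennreal (exponential_density l x) \<partial>lborel) = 1"
    using emeasure_space_1 by (simp add: emeasure_density)
  have "(\<integral>\<^sup>+x. ennreal (exp (- x / c)) \<partial>std_exponential)
      = (\<integral>\<^sup>+x. ennreal (exponential_density 1 x) * ennreal (exp (- x / c)) \<partial>lborel)"
    unfolding std_exponential_def by (rule nn_integral_density) measurable
  also have "\<dots> = (\<integral>\<^sup>+x. ennreal (1 / l) * ennreal (exponential_density l x) \<partial>lborel)"
    by (simp only: dens)
  also have "\<dots> = ennreal (1 / l)"
    by (subst nn_integral_cmult) (simp_all add: total)
  also have "1 / l = c / (c + 1)"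
    using c by (simp add: l_def field_simps)
  finally show ?thesis .
qed

lemma nn_integral_exp_weighted_sum_stream:
  assumes "0 < c"
  shows "(\<integral>\<^sup>+s. ennreal (exp (- (\<Sum>j<i. s !! j / (real j + c)))) \<partial>stream_space std_exponential)
    = ennreal (c / (c + real i))"
  using assms
proof (induction i arbitrary: c)
  case 0
  interpret prob_space "stream_space std_exponential"
    by (rule prob_space_stream_space_std_exponential)
  show ?case
    using emeasure_space_1 0 by simp
next
  case (Suc i)
  interpret prob_space std_exponential by (rule prob_space_std_exponential)
  have c: "0 < c" by fact
  have split: "ennreal (exp (- (\<Sum>j<Suc i. (x ## s) !! j / (real j + c))))
      = ennreal (exp (- x / c)) * ennreal (exp (- (\<Sum>j<i. s !! j / (real j + (c + 1)))))" for x s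
  proof -
    have "(\<Sum>j<Suc i. (x ## s) !! j / (real j + c)) = x / c + (\<Sum>j<i. s !! j / (real j + (c + 1)))"
      by (subst sum.lessThan_Suc_shift) (simp add: add_ac)
    then show ?thesis
      by (simp add: mult_exp_exp flip: ennreal_mult)
  qed
  have "(\<integral>\<^sup>+s. ennreal (exp (- (\<Sum>j<Suc i. s !! j / (real j + c)))) \<partial>stream_space std_exponential)
    = (\<integral>\<^sup>+x. \<integral>\<^sup>+s. ennreal (exp (- (\<Sum>j<Suc i. (x ## s) !! j / (real j + c))))
         \<partial>stream_space std_exponential \<partial>std_exponential)"
    by (rule nn_integral_stream_space) measurable
  also have "\<dots> = (\<integral>\<^sup>+x. \<integral>\<^sup>+s. ennreal (exp (- x / c)) * ennreal (exp (- (\<Sum>j<i. s !! j / (real j + (c + 1)))))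
         \<partial>stream_space std_exponential \<partial>std_exponential)"
    by (simp only: split)
  also have "\<dots> = (\<integral>\<^sup>+x. ennreal (exp (- x / c)) * ennreal ((c + 1) / (c + 1 + real i)) \<partial>std_exponential)"
    using Suc.IH[of "c + 1"] c by (subst nn_integral_cmult) simp_all
  also have "\<dots> = ennreal (c / (c + 1)) * ennreal ((c + 1) / (c + 1 + real i))"
    using nn_integral_exp_std_exponential[OF c] by (subst nn_integral_multc) simp_all
  also have "\<dots> = ennreal (c / (c + real (Suc i)))"
    using c by (simp add: add_ac flip: ennreal_mult)
  finally show ?case .
qed

lemma (in prob_space) emeasure_stream_space_stl:
  assumes "X \<in> sets (stream_space M)"
  shows "emeasure (stream_space M) {s \<in> space (stream_space M). stl s \<in> X} = emeasure (stream_space M) X"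
proof -
  interpret S: prob_space "stream_space M" by (rule prob_space_stream_space)
  have meas: "{s \<in> space (stream_space M). stl s \<in> X} \<in> sets (stream_space M)"
    using assms by measurable
  have "{x \<in> space (stream_space M). t ## x \<in> {s \<in> space (stream_space M). stl s \<in> X}} = X"
    if "t \<in> space M" for t
    using that sets.sets_into_space[OF assms] by (auto simp: space_stream_space streams_Stream)
  then have "emeasure (stream_space M) {s \<in> space (stream_space M). stl s \<in> X}
      = (\<integral>\<^sup>+t. emeasure (stream_space M) X \<partial>M)"
    unfolding emeasure_stream_space[OF meas] by (intro nn_integral_cong) simp
  then show ?thesis
    using emeasure_space_1 by simp
qed

lemma snth_to_stream [simp]: "snth (to_stream X) = X"
  by (auto simp: to_stream_def)

lemma (in prob_space) emeasure_indep_vars_stream: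
  assumes indep: "indep_vars (\<lambda>_. borel) X UNIV"
    and distr: "\<And>i. distr M borel (X i) = N" and sets_N: "sets N = sets borel"
    and P: "{s \<in> space (stream_space N). P (snth s)} \<in> sets (stream_space N)"
  shows "emeasure M {\<omega> \<in> space M. P (\<lambda>i. X i \<omega>)}
    = emeasure (stream_space N) {s \<in> space (stream_space N). P (snth s)}"
proof -
  let ?Y = "\<lambda>\<omega>. \<lambda>i\<in>UNIV. X i \<omega>"
  have X: "X i \<in> borel_measurable M" for i
    using indep by (auto simp: indep_vars_def)
  have sets_Pi: "sets (PiM UNIV (\<lambda>_::nat. N)) = sets (PiM UNIV (\<lambda>_::nat. borel))"
    by (rule sets_PiM_cong) (simp_all add: sets_N)
  have Y: "?Y \<in> measurable M (PiM UNIV (\<lambda>_. borel))"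
    by (rule measurable_restrict) (simp add: X)
  have to_stream: "to_stream \<in> measurable (PiM UNIV (\<lambda>_. borel)) (stream_space N)"
    using measurable_to_stream[of N] by (simp add: measurable_cong_sets[OF sets_Pi refl])
  have distr_Y: "distr M (PiM UNIV (\<lambda>_. borel)) ?Y = PiM UNIV (\<lambda>_. N)"
    using indep_vars_iff_distr_eq_PiM[where I=UNIV and M'="\<lambda>_. borel" and X=X] indep X
    by (simp add: distr)
  have distr_stream: "distr M (stream_space N) (\<lambda>\<omega>. to_stream (\<lambda>i. X i \<omega>)) = stream_space N"
  proof -
    have "distr M (stream_space N) (\<lambda>\<omega>. to_stream (\<lambda>i. X i \<omega>))
        = distr (distr M (PiM UNIV (\<lambda>_. borel)) ?Y) (stream_space N) to_stream"
      using distr_distr[OF to_stream Y] by (simp add: comp_def restrict_UNIV)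
    also have "\<dots> = stream_space N"
      by (simp only: distr_Y stream_space_eq_distr[of N, symmetric])
    finally show ?thesis .
  qed
  have F: "(\<lambda>\<omega>. to_stream (\<lambda>i. X i \<omega>)) \<in> measurable M (stream_space N)"
    using measurable_comp[OF Y to_stream] by (simp add: comp_def restrict_UNIV)
  have "emeasure (stream_space N) {s \<in> space (stream_space N). P (snth s)}
      = emeasure M ((\<lambda>\<omega>. to_stream (\<lambda>i. X i \<omega>)) -` {s \<in> space (stream_space N). P (snth s)} \<inter> space M)"
    using emeasure_distr[OF F P] by (simp only: distr_stream)
  also have "(\<lambda>\<omega>. to_stream (\<lambda>i. X i \<omega>)) -` {s \<in> space (stream_space N). P (snth s)} \<inter> space M
      = {\<omega> \<in> space M. P (\<lambda>i. X i \<omega>)}"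
    using measurable_space[OF F] by auto
  finally show ?thesis
    by (rule sym)
qed

lemma (in prob_space) emeasure_stream_space_shd:
  assumes "B \<in> sets M"
  shows "emeasure (stream_space M) {s \<in> space (stream_space M). shd s \<in> B} = emeasure M B"
proof -
  interpret S: prob_space "stream_space M" by (rule prob_space_stream_space)
  have "{s \<in> space (stream_space M). shd s \<in> B} \<in> sets (stream_space M)"
    using assms by measurable
  then have "emeasure (stream_space M) {s \<in> space (stream_space M). shd s \<in> B}
      = (\<integral>\<^sup>+t. indicator B t \<partial>M)"
    by (subst emeasure_stream_space) (auto intro!: nn_integral_cong simp: space_stream_space
        streams_Stream S.emeasure_space_1[unfolded space_stream_space] split: split_indicator)
  then show ?thesis
    using assms by simp
qed

lemma (in prob_space) distributed_exponential1_distr: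
  assumes "distributed M lborel X (exponential_density 1)"
  shows "distr M borel X = std_exponential"
proof -
  have "distr M borel X = distr M lborel X"
    by (rule distr_cong) auto
  also have "\<dots> = std_exponential"
    using distributed_distr_eq_density[OF assms] by (simp add: std_exponential_def)
  finally show ?thesis .
qed

section \<open>The construction as a Markov chain\<close>

locale excursion_fun =
  fixes \<sigma> :: real and f :: "real \<Rightarrow> real"
  assumes sigma_pos: "0 < \<sigma>" and excursion_f: "excursion \<sigma> f"
begin

lemma continuous_on_f: "continuous_on {0..\<sigma>} f"
  and f_nonneg: "x \<in> {0..\<sigma>} \<Longrightarrow> 0 \<le> f x"
  and f_eq_0_iff: "x \<in> {0..\<sigma>} \<Longrightarrow> f x = 0 \<longleftrightarrow> x = 0 \<or> x = \<sigma>"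
  using excursion_f unfolding excursion_def by auto

definition f_ext :: "real \<Rightarrow> real" where
  "f_ext = ext_cont f 0 \<sigma>"

lemma f_ext_eq: "x \<in> {0..\<sigma>} \<Longrightarrow> f_ext x = f x"
  by (simp add: f_ext_def)

lemma clamp_in_interval_real: "clamp 0 \<sigma> x \<in> {0..\<sigma>}"
  using clamp_in_interval[of 0 \<sigma> x] sigma_pos by simp

lemma uniformly_continuous_f_ext: "uniformly_continuous_on UNIV f_ext"
proof -
  have "1-lipschitz_on UNIV (clamp 0 \<sigma> :: real \<Rightarrow> real)"
    by (intro lipschitz_onI) (simp_all add: dist_clamps_le_dist_args)
  then have "uniformly_continuous_on UNIV (clamp 0 \<sigma> :: real \<Rightarrow> real)"
    by (rule lipschitz_on_uniformly_continuous)
  moreover have "range (clamp 0 \<sigma>) = {0..\<sigma>}"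
    using clamp_in_interval_real by (force intro: clamp_cancel_cbox[symmetric])
  then have "uniformly_continuous_on (range (clamp 0 \<sigma>)) f"
    using compact_uniformly_continuous[OF continuous_on_f compact_Icc] by simp
  ultimately show ?thesis
    unfolding f_ext_def ext_cont_def by (rule uniformly_continuous_on_compose)
qed

lemma continuous_on_f_ext: "continuous_on S f_ext"
  using uniformly_continuous_imp_continuous[OF uniformly_continuous_f_ext] continuous_on_subset
  by blast

lemma f_ext_nonneg: "0 \<le> f_ext x"
  using f_nonneg[OF clamp_in_interval_real] by (simp add: f_ext_def ext_cont_def)

lemma f_ext_pos: "0 < x \<Longrightarrow> x < \<sigma> \<Longrightarrow> 0 < f_ext x"
  using f_eq_0_iff[of x] f_nonneg[of x] f_ext_eq[of x] by fastforce

lemma f_ext_0 [simp]: "f_ext 0 = 0" and f_ext_sigma [simp]: "f_ext \<sigma> = 0"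
  using f_eq_0_iff[of 0] f_eq_0_iff[of \<sigma>] sigma_pos by (simp_all add: f_ext_eq)

lemma f_ext_bounded:
  obtains B where "0 < B" "\<And>x. f_ext x \<le> B"
proof -
  have "bounded (range f_ext)"
    unfolding f_ext_def ext_cont_def
    by (rule clamp_bounded) (use compact_continuous_image[OF continuous_on_f] in
        \<open>simp add: compact_imp_bounded\<close>)
  then obtain B where "\<And>x. \<bar>f_ext x\<bar> \<le> B"
    by (auto simp: bounded_iff)
  then have "f_ext x \<le> max B 1" for x
    by (meson abs_ge_self max.coboundedI1 order.trans)
  then show ?thesis
    using that[of "max B 1"] by simp
qed

lemma fhat_ext_le: "z \<in> {min a x..max a x} \<Longrightarrow> fhat f_ext a x \<le> f_ext z"
  by (rule fhat_le[OF continuous_on_f_ext])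

lemma fhat_ext_le_self: "fhat f_ext a x \<le> f_ext x"
  by (rule fhat_ext_le) auto

lemma fhat_ext_nonneg: "0 \<le> fhat f_ext a x"
  by (metis fhat_attains_min[OF continuous_on_f_ext] f_ext_nonneg)

lemma fhat_ext_0 [simp]: "fhat f_ext 0 x = 0"
  using fhat_ext_le[of 0 0 x] fhat_ext_nonneg[of 0 x] by simp

lemma fhat_ext_eq: "a \<in> {0..\<sigma>} \<Longrightarrow> x \<in> {0..\<sigma>} \<Longrightarrow> fhat f_ext a x = fhat f a x"
  by (rule fhat_cong) (auto intro!: f_ext_eq)

text \<open>In the state \<open>(a, L)\<close> after the \<open>i\<close>-th step, \<open>a = s\<^sub>i\<close> and \<open>L\<close> is the length of the
  subtree spanned by the root and \<open>p\<^sub>f(s\<^sub>1), \<dots>, p\<^sub>f(s\<^sub>i)\<close>, so that \<open>intensity a L = \<ell>\<^sub>i\<close>.\<close>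

definition intensity :: "real \<Rightarrow> real \<Rightarrow> real \<Rightarrow> real" where
  "intensity a L t = L + f_ext t - fhat f_ext a t"

definition cum_intensity :: "real \<Rightarrow> real \<Rightarrow> real \<Rightarrow> real" where
  "cum_intensity a L t = integral {a..t} (intensity a L)"

lemma intensity_ge: "L \<le> intensity a L t"
  using fhat_ext_le_self[of a t] by (simp add: intensity_def)

lemma intensity_le:
  assumes "\<And>x. f_ext x \<le> B"
  shows "intensity a L t \<le> L + B"
  using assms[of t] fhat_ext_nonneg[of a t] unfolding intensity_def by linarith

lemma continuous_on_intensity3:
  "continuous_on UNIV (\<lambda>z::real \<times> real \<times> real. intensity (fst z) (fst (snd z)) (snd (snd z)))"
proof -
  have "continuous_on UNIV (\<lambda>z::real \<times> real \<times> real.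
      fhat f_ext (fst (fst z, snd (snd z))) (snd (fst z, snd (snd z))))"
    by (rule continuous_on_compose2[OF continuous_on_fhat[OF uniformly_continuous_f_ext]])
      (auto intro!: continuous_intros)
  moreover have "continuous_on UNIV (\<lambda>z::real \<times> real \<times> real. f_ext (snd (snd z)))"
    by (rule continuous_on_compose2[OF continuous_on_f_ext]) (auto intro!: continuous_intros)
  ultimately show ?thesis
    unfolding intensity_def by (auto intro!: continuous_intros)
qed

lemma continuous_on_intensity: "continuous_on S (intensity a L)"
  by (rule continuous_on_compose2[OF continuous_on_intensity3, of _ "\<lambda>t. (a, L, t)", simplified])
    (auto intro!: continuous_intros)

lemma intensity_integrable_on: "intensity a L integrable_on {c..d}"
  by (rule integrable_continuous_interval[OF continuous_on_intensity])

lemma measurable_intensity [measurable (raw)]: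
  assumes [measurable]: "g1 \<in> borel_measurable M" "g2 \<in> borel_measurable M" "g3 \<in> borel_measurable M"
  shows "(\<lambda>w. intensity (g1 w) (g2 w) (g3 w)) \<in> borel_measurable M"
proof -
  have "(\<lambda>w. (g1 w, g2 w, g3 w)) \<in> borel_measurable M"
    by measurable
  from measurable_compose[OF this borel_measurable_continuous_onI[OF continuous_on_intensity3]]
  show ?thesis by simp
qed

lemma measurable_cum_intensity [measurable (raw)]:
  assumes [measurable]: "g1 \<in> borel_measurable M" "g2 \<in> borel_measurable M" "g3 \<in> borel_measurable M"
  shows "(\<lambda>w. cum_intensity (g1 w) (g2 w) (g3 w)) \<in> borel_measurable M"
proof -
  have lint: "cum_intensity a L t
      = (\<integral>x. (if a \<le> x \<and> x \<le> t then 1 else 0) * intensity a L x \<partial>lborel)" for a L t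
  proof -
    have "set_integrable lborel {a..t} (intensity a L)"
      unfolding set_integrable_def
      by (rule borel_integrable_compact) (auto intro: continuous_on_intensity)
    from set_borel_integral_eq_integral(2)[OF this] show ?thesis
      by (simp add: cum_intensity_def set_lebesgue_integral_def indicator_def of_bool_def)
  qed
  have [measurable]: "(\<lambda>(z::real \<times> real \<times> real, x::real).
      (if fst z \<le> x \<and> x \<le> snd (snd z) then 1 else 0) * intensity (fst z) (fst (snd z)) x)
      \<in> borel_measurable ((borel \<Otimes>\<^sub>M borel \<Otimes>\<^sub>M borel) \<Otimes>\<^sub>M lborel)"
    by measurable
  have "(\<lambda>z::real \<times> real \<times> real. cum_intensity (fst z) (fst (snd z)) (snd (snd z))) \<in> borel_measurable borel"
    unfolding lint borel_prod[symmetric] by measurable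
  from measurable_compose[OF _ this, of "\<lambda>w. (g1 w, g2 w, g3 w)"] show ?thesis
    by simp
qed

text \<open>An antiderivative of \<open>intensity a L\<close> on \<open>(a - 1, \<infinity>)\<close> that agrees with \<open>cum_intensity a L\<close>
  right of \<open>a\<close>: the substitution rule needs a derivative at the endpoint \<open>a\<close> itself.\<close>

definition intensity_antideriv :: "real \<Rightarrow> real \<Rightarrow> real \<Rightarrow> real" where
  "intensity_antideriv a L t = integral {a - 1..t} (intensity a L) - integral {a - 1..a} (intensity a L)"

lemma intensity_antideriv_has_derivative:
  assumes "a - 1 < t"
  shows "(intensity_antideriv a L has_real_derivative intensity a L t) (at t)"
proof -
  have "((\<lambda>x. integral {a - 1..x} (intensity a L)) has_real_derivative intensity a L t)
      (at t within {a - 1..t + 1})"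
    by (rule integral_has_real_derivative) (use assms in \<open>auto intro: continuous_on_intensity\<close>)
  moreover have "at t within {a - 1..t + 1} = at t"
    by (rule at_within_interior) (use assms in auto)
  ultimately show ?thesis
    unfolding intensity_antideriv_def[abs_def] by (auto intro: derivative_eq_intros)
qed

lemma intensity_antideriv_eq:
  assumes "a \<le> t"
  shows "intensity_antideriv a L t = cum_intensity a L t"
proof -
  have "integral {a - 1..a} (intensity a L) + integral {a..t} (intensity a L)
      = integral {a - 1..t} (intensity a L)"
    by (rule Henstock_Kurzweil_Integration.integral_combine) (use assms intensity_integrable_on in auto)
  then show ?thesis
    by (simp add: intensity_antideriv_def cum_intensity_def)
qed

lemma continuous_on_intensity_antideriv: "continuous_on {a..b} (intensity_antideriv a L)"
  by (rule has_real_derivative_imp_continuous_on) (auto intro: intensity_antideriv_has_derivative)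

lemma continuous_on_cum_intensity: "continuous_on {a..b} (cum_intensity a L)"
  using continuous_on_intensity_antideriv
  by (rule continuous_on_cong[THEN iffD1, rotated 2]) (auto simp: intensity_antideriv_eq)

lemma cum_intensity_self [simp]: "cum_intensity a L a = 0"
  by (simp add: cum_intensity_def)

lemma cum_intensity_mono:
  assumes "0 \<le> L" "a \<le> t" "t \<le> t'"
  shows "cum_intensity a L t \<le> cum_intensity a L t'"
proof -
  have "intensity_antideriv a L t \<le> intensity_antideriv a L t'"
  proof (rule DERIV_nonneg_imp_increasing_open[OF assms(3)])
    fix x assume "t < x" "x < t'"
    then show "\<exists>y. DERIV (intensity_antideriv a L) x :> y \<and> y \<ge> 0"
      using assms intensity_antideriv_has_derivative[of a x L] intensity_ge[of L a x] by force
  qed (rule continuous_on_subset[OF continuous_on_intensity_antideriv[of a t' L]], use assms in auto)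
  then show ?thesis
    using assms by (simp add: intensity_antideriv_eq)
qed

text \<open>The states reached by the construction: the root, a point after at least one step (whose
  subtree has positive length), and the degenerate state of a first point at \<open>\<sigma>\<close>.\<close>

definition admissible :: "real \<Rightarrow> real \<Rightarrow> bool" where
  "admissible a L \<longleftrightarrow> (a = 0 \<and> L = 0) \<or> (0 < a \<and> a \<le> \<sigma> \<and> 0 < L) \<or> (a = \<sigma> \<and> L = 0)"

definition active :: "real \<Rightarrow> real \<Rightarrow> bool" where
  "active a L \<longleftrightarrow> admissible a L \<and> a < \<sigma>"

lemma admissible_bounds: "admissible a L \<Longrightarrow> 0 \<le> a \<and> a \<le> \<sigma> \<and> 0 \<le> L"
  using sigma_pos by (auto simp: admissible_def)

lemma measurable_admissible [measurable (raw)]: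
  assumes [measurable]: "g1 \<in> borel_measurable M" "g2 \<in> borel_measurable M"
  shows "Measurable.pred M (\<lambda>w. admissible (g1 w) (g2 w))"
  unfolding admissible_def by measurable

lemma cum_intensity_sigma_nonneg: "admissible a L \<Longrightarrow> 0 \<le> cum_intensity a L \<sigma>"
  using cum_intensity_mono[of L a a \<sigma>] admissible_bounds[of a L] by simp

lemma intensity_pos: "active a L \<Longrightarrow> a < t \<Longrightarrow> t < \<sigma> \<Longrightarrow> 0 < intensity a L t"
  using intensity_ge[of L a t] f_ext_pos[of t]
  by (fastforce simp: active_def admissible_def intensity_def)

lemma cum_intensity_strict_mono:
  assumes "active a L" "a \<le> t" "t < t'" "t' \<le> \<sigma>"
  shows "cum_intensity a L t < cum_intensity a L t'"
proof -
  have "intensity_antideriv a L t < intensity_antideriv a L t'"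
  proof (rule DERIV_pos_imp_increasing_open[OF assms(3)])
    fix x assume "t < x" "x < t'"
    then show "\<exists>y. DERIV (intensity_antideriv a L) x :> y \<and> y > 0"
      using assms intensity_antideriv_has_derivative[of a x L] intensity_pos[of a L x] by force
  qed (rule continuous_on_subset[OF continuous_on_intensity_antideriv[of a t' L]], use assms in auto)
  then show ?thesis
    using assms by (simp add: intensity_antideriv_eq)
qed

definition first_passage :: "real \<Rightarrow> real \<Rightarrow> real \<Rightarrow> real" where
  "first_passage a L x = Inf {t \<in> {a..\<sigma>}. x \<le> cum_intensity a L t}"

lemma first_passage:
  assumes "admissible a L" "x \<le> cum_intensity a L \<sigma>"
  shows first_passage_in: "first_passage a L x \<in> {a..\<sigma>}"
    and cum_intensity_first_passage: "x \<le> cum_intensity a L (first_passage a L x)"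
    and first_passage_le_iff: "first_passage a L x \<le> c \<longleftrightarrow> \<sigma> \<le> c \<or> (a \<le> c \<and> x \<le> cum_intensity a L c)"
proof -
  define S where "S = {t \<in> {a..\<sigma>}. x \<le> cum_intensity a L t}"
  have bounds: "a \<le> \<sigma>" "0 \<le> L"
    using admissible_bounds[OF assms(1)] by auto
  have "closed ({a..\<sigma>} \<inter> cum_intensity a L -` {x..})"
    by (rule continuous_closed_preimage[OF continuous_on_cum_intensity]) auto
  moreover have "{a..\<sigma>} \<inter> cum_intensity a L -` {x..} = S"
    by (auto simp: S_def)
  ultimately have "Inf S \<in> S"
    using assms bounds by (intro closed_contains_Inf) (auto simp: S_def bdd_below_def)
  then show in_S: "first_passage a L x \<in> {a..\<sigma>}" "x \<le> cum_intensity a L (first_passage a L x)"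
    by (auto simp: S_def first_passage_def)
  have "first_passage a L x \<le> c" if "a \<le> c" "c \<le> \<sigma>" "x \<le> cum_intensity a L c"
    unfolding first_passage_def by (rule cInf_lower) (use that in auto)
  moreover have "x \<le> cum_intensity a L c" if "first_passage a L x \<le> c" "c < \<sigma>"
    using cum_intensity_mono[of L a "first_passage a L x" c] in_S that bounds by auto
  ultimately show "first_passage a L x \<le> c \<longleftrightarrow> \<sigma> \<le> c \<or> (a \<le> c \<and> x \<le> cum_intensity a L c)"
    using in_S by force
qed

lemma first_passage_cum_intensity:
  assumes "active a L" "t \<in> {a..\<sigma>}"
  shows "first_passage a L (cum_intensity a L t) = t"
proof -
  have adm: "admissible a L" and "0 \<le> L"
    using assms admissible_bounds by (auto simp: active_def)
  then have le: "cum_intensity a L t \<le> cum_intensity a L \<sigma>"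
    using cum_intensity_mono[of L a t \<sigma>] assms by auto
  have "first_passage a L (cum_intensity a L t) \<le> t"
    using first_passage_le_iff[OF adm le, of t] assms by auto
  moreover have "\<not> first_passage a L (cum_intensity a L t) < t"
    using cum_intensity_strict_mono[OF assms(1)] first_passage_in[OF adm le]
      cum_intensity_first_passage[OF adm le] assms(2) by force
  ultimately show ?thesis
    by simp
qed

lemma first_passage_inside:
  assumes "active a L" "0 < x" "x < cum_intensity a L \<sigma>"
  shows "a < first_passage a L x" "first_passage a L x < \<sigma>"
proof -
  have "a \<le> \<sigma>"
    using assms(1) admissible_bounds by (auto simp: active_def)
  then obtain t where t: "a \<le> t" "t \<le> \<sigma>" "cum_intensity a L t = x"
    using IVT'[of "cum_intensity a L" a x \<sigma>] continuous_on_cum_intensity[of a \<sigma> L] assms by auto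
  then have "first_passage a L x = t"
    using first_passage_cum_intensity[OF assms(1), of t] by auto
  then show "a < first_passage a L x" "first_passage a L x < \<sigma>"
    using t assms(2,3) by (auto simp: order.order_iff_strict)
qed

abbreviation cemetery :: "real \<times> real" where
  "cemetery \<equiv> (\<sigma> + 1, 0)"

definition step :: "real \<times> real \<Rightarrow> real \<Rightarrow> real \<times> real" where
  "step p x = (if admissible (fst p) (snd p) \<and> x \<le> cum_intensity (fst p) (snd p) \<sigma>
     then (first_passage (fst p) (snd p) x, intensity (fst p) (snd p) (first_passage (fst p) (snd p) x))
     else cemetery)"

lemma measurable_step [measurable (raw)]:
  assumes [measurable]: "g \<in> measurable M (borel \<Otimes>\<^sub>M borel)" "h \<in> borel_measurable M"
  shows "(\<lambda>w. step (g w) (h w)) \<in> measurable M (borel \<Otimes>\<^sub>M borel)"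
proof -
  define C where "C z \<longleftrightarrow> admissible (fst (fst z)) (snd (fst z)) \<and>
    snd z \<le> cum_intensity (fst (fst z)) (snd (fst z)) \<sigma>" for z :: "(real \<times> real) \<times> real"
  define T where "T z = fst (step (fst z) (snd z))" for z
  have [measurable]: "Measurable.pred ((borel \<Otimes>\<^sub>M borel) \<Otimes>\<^sub>M borel) C"
    unfolding C_def by measurable
  have "{z \<in> space borel. T z \<le> c} = {z \<in> space borel. (C z \<and> (\<sigma> \<le> c \<or>
      (fst (fst z) \<le> c \<and> snd z \<le> cum_intensity (fst (fst z)) (snd (fst z)) c))) \<or> (\<not> C z \<and> \<sigma> + 1 \<le> c)}"
    for c
    using first_passage_le_iff by (auto simp: T_def C_def step_def)
  moreover have "{z \<in> space borel. (C z \<and> (\<sigma> \<le> c \<or>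
      (fst (fst z) \<le> c \<and> snd z \<le> cum_intensity (fst (fst z)) (snd (fst z)) c))) \<or> (\<not> C z \<and> \<sigma> + 1 \<le> c)}
      \<in> sets borel" for c
    unfolding borel_prod[symmetric] by measurable
  ultimately have "T \<in> borel_measurable borel"
    by (simp add: borel_measurable_iff_le)
  then have [measurable]: "T \<in> borel_measurable ((borel \<Otimes>\<^sub>M borel) \<Otimes>\<^sub>M borel)"
    by (simp add: borel_prod)
  have eq: "(\<lambda>z. step (fst z) (snd z)) = (\<lambda>z. (T z, if C z then intensity (fst (fst z)) (snd (fst z)) (T z) else 0))"
    by (auto simp: step_def T_def C_def)
  have "(\<lambda>z. step (fst z) (snd z)) \<in> measurable ((borel \<Otimes>\<^sub>M borel) \<Otimes>\<^sub>M borel) (borel \<Otimes>\<^sub>M borel)"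
    unfolding eq by measurable
  from measurable_compose[OF _ this, of "\<lambda>w. (g w, h w)"] show ?thesis
    by simp
qed

lemma step_cemetery [simp]: "step cemetery x = cemetery"
  using sigma_pos by (simp add: step_def admissible_def)

lemma step_beyond: "admissible a L \<Longrightarrow> cum_intensity a L \<sigma> < x \<Longrightarrow> step (a, L) x = cemetery"
  by (simp add: step_def)

lemma step_admissible:
  assumes "admissible (fst p) (snd p)"
  shows "admissible (fst (step p x)) (snd (step p x)) \<or> step p x = cemetery"
proof (cases "x \<le> cum_intensity (fst p) (snd p) \<sigma>")
  case True
  obtain a L where p: "p = (a, L)" by (cases p)
  define t where "t = first_passage a L x"
  have adm: "admissible a L"
    using assms by (simp add: p)
  have t: "t \<in> {a..\<sigma>}"
    using first_passage_in adm True by (simp add: t_def p)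
  have "admissible t (intensity a L t)"
    using adm unfolding admissible_def
  proof (elim disjE)
    assume "a = 0 \<and> L = 0"
    then show "(t = 0 \<and> intensity a L t = 0) \<or> (0 < t \<and> t \<le> \<sigma> \<and> 0 < intensity a L t) \<or>
        (t = \<sigma> \<and> intensity a L t = 0)"
      using t f_ext_pos[of t] by (cases "t = 0 \<or> t = \<sigma>") (auto simp: intensity_def)
  qed (use t intensity_ge[of L a t] in \<open>auto simp: intensity_def\<close>)
  then show ?thesis
    using assms True by (simp add: step_def p t_def)
qed (simp add: step_def)

lemma step_active:
  assumes "active a L" "0 < x" "x < cum_intensity a L \<sigma>"
  shows "step (a, L) x = (first_passage a L x, intensity a L (first_passage a L x))"
    and "active (first_passage a L x) (intensity a L (first_passage a L x))"
proof -
  have adm: "admissible a L"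
    using assms(1) by (simp add: active_def)
  show step: "step (a, L) x = (first_passage a L x, intensity a L (first_passage a L x))"
    using adm assms by (simp add: step_def)
  have "first_passage a L x < \<sigma>"
    by (rule first_passage_inside[OF assms])
  then show "active (first_passage a L x) (intensity a L (first_passage a L x))"
    using step_admissible[of "(a, L)" x] adm step by (auto simp: active_def)
qed

primrec chain :: "real \<times> real \<Rightarrow> real stream \<Rightarrow> nat \<Rightarrow> real \<times> real" where
  "chain p s 0 = p"
| "chain p s (Suc i) = step (chain p s i) (s !! i)"

lemma chain_Cons: "chain p (x ## s) (Suc i) = chain (step p x) s i"
  by (induction i) auto

lemma measurable_chain [measurable]:
  "(\<lambda>s. chain p s i) \<in> measurable (stream_space std_exponential) (borel \<Otimes>\<^sub>M borel)"
  by (induction i) (simp_all add: space_pair_measure)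

lemma chain_cemetery [simp]: "chain cemetery s i = cemetery"
  by (induction i) simp_all

lemma chain_admissible:
  "admissible (fst p) (snd p) \<Longrightarrow>
    admissible (fst (chain p s i)) (snd (chain p s i)) \<or> chain p s i = cemetery"
  by (induction i) (auto dest: step_admissible)

lemma chain_alive_iff_admissible:
  "admissible (fst p) (snd p) \<Longrightarrow>
    fst (chain p s i) \<le> \<sigma> \<longleftrightarrow> admissible (fst (chain p s i)) (snd (chain p s i))"
  using chain_admissible[of p s i] admissible_bounds by fastforce

lemma chain_alive_Suc:
  "admissible (fst p) (snd p) \<Longrightarrow> fst (chain p s (Suc i)) \<le> \<sigma> \<Longrightarrow> fst (chain p s i) \<le> \<sigma>"
  using chain_admissible[of p s i] admissible_bounds by force

lemma chain_alive_mono: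
  assumes "admissible (fst p) (snd p)" "j \<le> i" "fst (chain p s i) \<le> \<sigma>"
  shows "fst (chain p s j) \<le> \<sigma>"
  using assms(2,3) by (induction rule: inc_induct) (auto intro: chain_alive_Suc[OF assms(1)])

subsection \<open>Density of the points\<close>

lemma step_cum_intensity:
  assumes "active a L" "t \<in> {a..\<sigma>}"
  shows "step (a, L) (cum_intensity a L t) = (t, intensity a L t)"
proof -
  have "admissible a L" "0 \<le> L"
    using assms(1) admissible_bounds by (auto simp: active_def)
  then show ?thesis
    using cum_intensity_mono[of L a t \<sigma>] assms first_passage_cum_intensity[OF assms]
    by (simp add: step_def)
qed

lemma nn_integral_substitution_cum_intensity:
  assumes "active a L" and [measurable]: "F \<in> borel_measurable borel"
  shows "(\<integral>\<^sup>+x. F x * indicator {0..cum_intensity a L \<sigma>} x \<partial>lborel)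
    = (\<integral>\<^sup>+t. F (cum_intensity a L t) * ennreal (intensity a L t) * indicator {a..\<sigma>} t \<partial>lborel)"
proof -
  have "a < \<sigma>" "0 \<le> L"
    using assms(1) admissible_bounds by (auto simp: active_def)
  then have "(\<integral>\<^sup>+x. F x * indicator {intensity_antideriv a L a..intensity_antideriv a L \<sigma>} x \<partial>lborel)
      = (\<integral>\<^sup>+t. F (intensity_antideriv a L t) * ennreal (intensity a L t) * indicator {a..\<sigma>} t \<partial>lborel)"
    using intensity_ge[of L a]
    by (intro nn_integral_substitution_aux intensity_antideriv_has_derivative continuous_on_intensity)
      (auto intro: order.trans)
  with \<open>a < \<sigma>\<close> show ?thesis
    by (auto simp: intensity_antideriv_eq intro!: nn_integral_cong split: split_indicator)
qed

lemma nn_integral_first_passage: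
  assumes act: "active a L" and [measurable]: "Psi \<in> borel_measurable borel"
  shows "(\<integral>\<^sup>+x. (if 0 < x \<and> x < cum_intensity a L \<sigma> then Psi (first_passage a L x) else 0) \<partial>std_exponential)
    = (\<integral>\<^sup>+t. indicator {a<..<\<sigma>} t * ennreal (intensity a L t * exp (- cum_intensity a L t)) * Psi t \<partial>lborel)"
proof -
  let ?\<Lambda> = "cum_intensity a L \<sigma>"
  have adm: "admissible a L" and "0 \<le> L"
    using act admissible_bounds by (auto simp: active_def)
  define F where "F x = ennreal (exp (- x)) * Psi (fst (step (a, L) x))" for x
  have [measurable]: "F \<in> borel_measurable borel"
    unfolding F_def by measurable
  have "(\<lambda>x. if 0 < x \<and> x < ?\<Lambda> then Psi (first_passage a L x) else 0)
      = (\<lambda>x. if 0 < x \<and> x < ?\<Lambda> then Psi (fst (step (a, L) x)) else 0)"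
    using adm by (auto simp: step_def)
  then have "(\<integral>\<^sup>+x. (if 0 < x \<and> x < ?\<Lambda> then Psi (first_passage a L x) else 0) \<partial>std_exponential)
      = (\<integral>\<^sup>+x. ennreal (exponential_density 1 x) * (if 0 < x \<and> x < ?\<Lambda> then Psi (fst (step (a, L) x)) else 0) \<partial>lborel)"
    unfolding std_exponential_def by (simp add: nn_integral_density)
  also have "\<dots> = (\<integral>\<^sup>+x. F x * indicator {0..?\<Lambda>} x \<partial>lborel)"
  proof (rule nn_integral_cong_AE)
    have "AE x in lborel. x \<noteq> 0" "AE x in lborel. x \<noteq> ?\<Lambda>"
      by (rule AE_lborel_singleton)+
    then show "AE x in lborel. ennreal (exponential_density 1 x) *
        (if 0 < x \<and> x < ?\<Lambda> then Psi (fst (step (a, L) x)) else 0) = F x * indicator {0..?\<Lambda>} x"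
      by eventually_elim (auto simp: F_def exponential_density_def indicator_def)
  qed
  also have "\<dots> = (\<integral>\<^sup>+t. F (cum_intensity a L t) * ennreal (intensity a L t) * indicator {a..\<sigma>} t \<partial>lborel)"
    by (rule nn_integral_substitution_cum_intensity[OF act]) simp
  also have "\<dots> = (\<integral>\<^sup>+t. indicator {a<..<\<sigma>} t * ennreal (intensity a L t * exp (- cum_intensity a L t)) * Psi t \<partial>lborel)"
  proof (rule nn_integral_cong_AE)
    have "AE t in lborel. t \<noteq> a" "AE t in lborel. t \<noteq> \<sigma>"
      by (rule AE_lborel_singleton)+
    then show "AE t in lborel. F (cum_intensity a L t) * ennreal (intensity a L t) * indicator {a..\<sigma>} t
        = indicator {a<..<\<sigma>} t * ennreal (intensity a L t * exp (- cum_intensity a L t)) * Psi t"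
    proof eventually_elim
      case (elim t)
      then show ?case
        using intensity_ge[of L a t] \<open>0 \<le> L\<close>
        by (auto simp: F_def step_cum_intensity[OF act] ennreal_mult' mult_ac split: split_indicator)
    qed
  qed
  finally show ?thesis .
qed

text \<open>The joint density of the positions \<open>w (Suc k), \<dots>, w (k + n)\<close> of the next \<open>n\<close> points of the
  chain started in \<open>p\<close>, together with the event that the chain dies right after them.\<close>

primrec path_density :: "nat \<Rightarrow> nat \<Rightarrow> real \<times> real \<Rightarrow> (nat \<Rightarrow> real) \<Rightarrow> ennreal" where
  "path_density 0 k p w = ennreal (exp (- cum_intensity (fst p) (snd p) \<sigma>))"
| "path_density (Suc n) k p w = indicator {fst p<..<\<sigma>} (w (Suc k)) *
     ennreal (intensity (fst p) (snd p) (w (Suc k)) * exp (- cum_intensity (fst p) (snd p) (w (Suc k)))) *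
     path_density n (Suc k) (w (Suc k), intensity (fst p) (snd p) (w (Suc k))) w"

lemma path_density_cong:
  "(\<And>i. Suc k \<le> i \<Longrightarrow> i \<le> k + n \<Longrightarrow> w i = w' i) \<Longrightarrow> path_density n k p w = path_density n k p w'"
proof (induction n arbitrary: k p)
  case (Suc n)
  have "path_density n (Suc k) q w = path_density n (Suc k) q w'" for q
    by (rule Suc.IH) (use Suc.prems in auto)
  then show ?case
    using Suc.prems[of "Suc k"] by simp
qed simp

lemma measurable_path_density:
  "{Suc k..k + n} \<subseteq> I \<Longrightarrow>
    (\<lambda>z. path_density n k (fst z) (snd z)) \<in> borel_measurable ((borel \<Otimes>\<^sub>M borel) \<Otimes>\<^sub>M PiM I (\<lambda>_. lborel))"
proof (induction n arbitrary: k)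
  case 0
  show ?case by simp measurable
next
  case (Suc n)
  let ?M = "(borel \<Otimes>\<^sub>M borel) \<Otimes>\<^sub>M PiM I (\<lambda>_. lborel)"
  have "Suc k \<in> I"
    using Suc.prems by auto
  then have [measurable]: "(\<lambda>z. snd z (Suc k)) \<in> borel_measurable ?M"
    by measurable
  have IH: "(\<lambda>z. path_density n (Suc k) (fst z) (snd z)) \<in> borel_measurable ?M"
    by (rule Suc.IH) (use Suc.prems in auto)
  have "(\<lambda>z. ((snd z (Suc k), intensity (fst (fst z)) (snd (fst z)) (snd z (Suc k))), snd z))
      \<in> measurable ?M ?M"
    by measurable
  from measurable_compose[OF this IH] have [measurable]: "(\<lambda>z. path_density n (Suc k)
      (snd z (Suc k), intensity (fst (fst z)) (snd (fst z)) (snd z (Suc k))) (snd z)) \<in> borel_measurable ?M"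
    by simp
  have indicator_eq: "(\<lambda>z. indicator {fst (fst z)<..<\<sigma>} (snd z (Suc k)) :: ennreal)
      = (\<lambda>z. if fst (fst z) < snd z (Suc k) \<and> snd z (Suc k) < \<sigma> then 1 else 0)"
    by (auto simp: indicator_def)
  have [measurable]: "(\<lambda>z. indicator {fst (fst z)<..<\<sigma>} (snd z (Suc k)) :: ennreal) \<in> borel_measurable ?M"
    unfolding indicator_eq by measurable
  show ?case
    unfolding path_density.simps by measurable
qed

definition exit_event :: "nat \<Rightarrow> nat \<Rightarrow> real \<times> real \<Rightarrow> (nat \<Rightarrow> real) set \<Rightarrow> real stream set" where
  "exit_event n k p A = {s \<in> space (stream_space std_exponential).
     fst (chain p s n) \<le> \<sigma> \<and> \<sigma> < fst (chain p s (Suc n)) \<and> (\<lambda>i\<in>{Suc k..k + n}. fst (chain p s (i - k))) \<in> A}"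

lemma sets_exit_event:
  assumes [measurable]: "A \<in> sets (PiM {Suc k..k + n} (\<lambda>_. lborel))"
  shows "exit_event n k p A \<in> sets (stream_space std_exponential)"
proof -
  have [measurable]: "(\<lambda>s. \<lambda>i\<in>{Suc k..k + n}. fst (chain p s (i - k)))
      \<in> measurable (stream_space std_exponential) (PiM {Suc k..k + n} (\<lambda>_. lborel))"
    by (rule measurable_restrict) simp
  show ?thesis
    unfolding exit_event_def by measurable
qed

lemma emeasure_exit_event_0:
  assumes "admissible a L"
  shows "emeasure (stream_space std_exponential) (exit_event 0 k (a, L) A)
    = indicator A (\<lambda>_. undefined) * ennreal (exp (- cum_intensity a L \<sigma>))"
proof -
  interpret prob_space std_exponential by (rule prob_space_std_exponential)
  have "\<sigma> < fst (step (a, L) x) \<longleftrightarrow> cum_intensity a L \<sigma> < x" for x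
    using first_passage_in[OF assms, of x] assms sigma_pos by (auto simp: step_def)
  moreover have "(\<lambda>i\<in>{Suc k..k + 0}. g i) = (\<lambda>_. undefined)" for g :: "nat \<Rightarrow> real"
    by auto
  ultimately have "exit_event 0 k (a, L) A = (if (\<lambda>_. undefined) \<in> A
      then {s \<in> space (stream_space std_exponential). shd s \<in> {cum_intensity a L \<sigma><..}} else {})"
    using admissible_bounds[OF assms] by (auto simp: exit_event_def)
  moreover have "emeasure (stream_space std_exponential)
      {s \<in> space (stream_space std_exponential). shd s \<in> {cum_intensity a L \<sigma><..}}
      = ennreal (exp (- cum_intensity a L \<sigma>))"
    using emeasure_stream_space_shd[of "{cum_intensity a L \<sigma><..}"]
      emeasure_std_exponential_greater[OF cum_intensity_sigma_nonneg[OF assms]]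
    by (simp add: sets_std_exponential greaterThan_def)
  ultimately show ?thesis
    by simp
qed

lemma exit_event_Cons:
  assumes act: "active a L" and x: "0 < x" "x < cum_intensity a L \<sigma>"
  shows "{s \<in> space (stream_space std_exponential). x ## s \<in> exit_event (Suc n) k (a, L) A}
    = exit_event n (Suc k) (step (a, L) x)
        {w \<in> space (PiM {Suc (Suc k)..Suc k + n} (\<lambda>_. lborel)). w(Suc k := first_passage a L x) \<in> A}"
proof -
  define J where "J = {Suc (Suc k)..Suc k + n}"
  define q where "q = step (a, L) x"
  have q: "q = (first_passage a L x, intensity a L (first_passage a L x))"
    using step_active(1)[OF assms] by (simp add: q_def)
  have chain_Cons': "chain (a, L) (x ## s) (Suc i) = chain q s i" for s i
    by (simp only: chain_Cons q_def)
  have "(\<lambda>i\<in>{Suc k..k + Suc n}. fst (chain (a, L) (x ## s) (i - k)))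
      = (\<lambda>i\<in>J. fst (chain q s (i - Suc k)))(Suc k := first_passage a L x)" for s
  proof
    fix i
    have "i - k = Suc (i - Suc k)" if "i \<in> J"
      using that by (auto simp: J_def)
    then show "(\<lambda>i\<in>{Suc k..k + Suc n}. fst (chain (a, L) (x ## s) (i - k))) i
        = ((\<lambda>i\<in>J. fst (chain q s (i - Suc k)))(Suc k := first_passage a L x)) i"
      by (cases "i = Suc k") (auto simp del: chain.simps simp add: J_def q chain_Cons' chain.simps(1))
  qed
  moreover have "(\<lambda>i\<in>J. fst (chain q s (i - Suc k))) \<in> space (PiM J (\<lambda>_. lborel))" for s
    by (simp add: space_PiM)
  ultimately show ?thesis
    by (auto simp: exit_event_def chain_Cons' J_def q_def simp del: chain.simps)
qed

lemma exit_event_Cons_beyond: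
  assumes "admissible a L" "cum_intensity a L \<sigma> < x"
  shows "{s \<in> space (stream_space std_exponential). x ## s \<in> exit_event (Suc n) k (a, L) A} = {}"
  using sigma_pos
  by (auto simp: exit_event_def chain_Cons step_beyond[OF assms] simp del: chain.simps)

definition path_mass_given_first :: "nat \<Rightarrow> nat \<Rightarrow> real \<times> real \<Rightarrow> (nat \<Rightarrow> real) set \<Rightarrow> real \<Rightarrow> ennreal" where
  "path_mass_given_first n k p A t = (\<integral>\<^sup>+w. indicator A (w(Suc k := t)) *
     path_density n (Suc k) (t, intensity (fst p) (snd p) t) w \<partial>PiM {Suc (Suc k)..Suc k + n} (\<lambda>_. lborel))"

lemma measurable_path_section:
  assumes "A \<in> sets (PiM {Suc k..k + Suc n} (\<lambda>_. lborel))"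
  shows "(\<lambda>z. indicator A ((snd z)(Suc k := fst z)) * path_density n (Suc k) (fst z, intensity a L (fst z)) (snd z))
    \<in> borel_measurable (lborel \<Otimes>\<^sub>M PiM {Suc (Suc k)..Suc k + n} (\<lambda>_. lborel))"
proof -
  let ?J = "{Suc (Suc k)..Suc k + n}"
  have "{Suc k..k + Suc n} = insert (Suc k) ?J"
    by auto
  with assms have "A \<in> sets (PiM (insert (Suc k) ?J) (\<lambda>_. lborel))"
    by (simp only:)
  from measurable_compose[OF measurable_fun_upd_PiM borel_measurable_indicator[OF this]]
  have [measurable]: "(\<lambda>z. indicator A ((snd z)(Suc k := fst z)) :: ennreal)
      \<in> borel_measurable (lborel \<Otimes>\<^sub>M PiM ?J (\<lambda>_. lborel))"
    by simp
  have "(\<lambda>z. ((fst z, intensity a L (fst z)), snd z))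
      \<in> measurable (lborel \<Otimes>\<^sub>M PiM ?J (\<lambda>_. lborel)) ((borel \<Otimes>\<^sub>M borel) \<Otimes>\<^sub>M PiM ?J (\<lambda>_. lborel))"
    by measurable
  from measurable_compose[OF this measurable_path_density[of "Suc k" n ?J]]
  have [measurable]: "(\<lambda>z. path_density n (Suc k) (fst z, intensity a L (fst z)) (snd z))
      \<in> borel_measurable (lborel \<Otimes>\<^sub>M PiM ?J (\<lambda>_. lborel))"
    by simp
  show ?thesis
    by measurable
qed

lemma borel_measurable_path_mass_given_first:
  assumes "A \<in> sets (PiM {Suc k..k + Suc n} (\<lambda>_. lborel))"
  shows "path_mass_given_first n k (a, L) A \<in> borel_measurable borel"
proof -
  interpret sigma_finite_measure "PiM {Suc (Suc k)..Suc k + n} (\<lambda>_. lborel)"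
    by (rule product_sigma_finite.sigma_finite[OF product_sigma_finite_lborel]) simp
  have "path_mass_given_first n k (a, L) A \<in> borel_measurable lborel"
    unfolding path_mass_given_first_def
    by (rule borel_measurable_nn_integral) (use measurable_path_section[OF assms] in simp)
  then show ?thesis
    by simp
qed

lemma nn_integral_path_density_Suc:
  assumes A: "A \<in> sets (PiM {Suc k..k + Suc n} (\<lambda>_. lborel))"
  shows "(\<integral>\<^sup>+w. indicator A w * path_density (Suc n) k (a, L) w \<partial>PiM {Suc k..k + Suc n} (\<lambda>_. lborel))
    = (\<integral>\<^sup>+t. indicator {a<..<\<sigma>} t * ennreal (intensity a L t * exp (- cum_intensity a L t)) *
         path_mass_given_first n k (a, L) A t \<partial>lborel)"
proof -
  let ?J = "{Suc (Suc k)..Suc k + n}"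
  have I: "{Suc k..k + Suc n} = insert (Suc k) ?J"
    by auto
  have [measurable]: "A \<in> sets (PiM (insert (Suc k) ?J) (\<lambda>_. lborel))"
    using A unfolding I .
  have "(\<lambda>z. path_density (Suc n) k (fst z) (snd z))
      \<in> borel_measurable ((borel \<Otimes>\<^sub>M borel) \<Otimes>\<^sub>M PiM (insert (Suc k) ?J) (\<lambda>_. lborel))"
    by (rule measurable_path_density) auto
  from measurable_Pair2[OF this, of "(a, L)"]
  have [measurable]: "path_density (Suc n) k (a, L) \<in> borel_measurable (PiM (insert (Suc k) ?J) (\<lambda>_. lborel))"
    by (simp add: space_pair_measure del: path_density.simps)
  have "(\<integral>\<^sup>+w. indicator A w * path_density (Suc n) k (a, L) w \<partial>PiM {Suc k..k + Suc n} (\<lambda>_. lborel))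
      = (\<integral>\<^sup>+t. \<integral>\<^sup>+w. indicator A (w(Suc k := t)) * path_density (Suc n) k (a, L) (w(Suc k := t))
          \<partial>PiM ?J (\<lambda>_. lborel) \<partial>lborel)"
    unfolding I
    by (rule product_sigma_finite.product_nn_integral_insert_rev[OF product_sigma_finite_lborel])
      (simp, simp, measurable)
  also have "\<dots> = (\<integral>\<^sup>+t. \<integral>\<^sup>+w. (indicator {a<..<\<sigma>} t * ennreal (intensity a L t * exp (- cum_intensity a L t))) *
      (indicator A (w(Suc k := t)) * path_density n (Suc k) (t, intensity a L t) w) \<partial>PiM ?J (\<lambda>_. lborel) \<partial>lborel)"
    using path_density_cong[of "Suc k" n "w(Suc k := t)" w "(t, intensity a L t)" for w t]
    by (intro nn_integral_cong) (simp add: mult_ac)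
  also have "\<dots> = (\<integral>\<^sup>+t. indicator {a<..<\<sigma>} t * ennreal (intensity a L t * exp (- cum_intensity a L t)) *
         path_mass_given_first n k (a, L) A t \<partial>lborel)"
    unfolding path_mass_given_first_def fst_conv snd_conv
    using measurable_Pair2[OF measurable_path_section[OF A]] by (intro nn_integral_cong nn_integral_cmult) simp
  finally show ?thesis .
qed

lemma AE_emeasure_exit_event_Cons:
  assumes act: "active a L" and A: "A \<in> sets (PiM {Suc k..k + Suc n} (\<lambda>_. lborel))"
    and emeasure_n: "\<And>a' L' A'. active a' L' \<Longrightarrow> A' \<in> sets (PiM {Suc (Suc k)..Suc k + n} (\<lambda>_. lborel)) \<Longrightarrow>
      emeasure (stream_space std_exponential) (exit_event n (Suc k) (a', L') A')
        = (\<integral>\<^sup>+w. indicator A' w * path_density n (Suc k) (a', L') w \<partial>PiM {Suc (Suc k)..Suc k + n} (\<lambda>_. lborel))"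
  shows "AE x in std_exponential.
    emeasure (stream_space std_exponential) {s \<in> space (stream_space std_exponential). x ## s \<in> exit_event (Suc n) k (a, L) A}
      = (if 0 < x \<and> x < cum_intensity a L \<sigma> then path_mass_given_first n k (a, L) A (first_passage a L x) else 0)"
  using AE_std_exponential[of "cum_intensity a L \<sigma>"]
proof eventually_elim
  case (elim x)
  show ?case
  proof (cases "x < cum_intensity a L \<sigma>")
    case True
    let ?T = "first_passage a L x" and ?J = "{Suc (Suc k)..Suc k + n}"
    let ?A = "{w \<in> space (PiM ?J (\<lambda>_. lborel)). w(Suc k := ?T) \<in> A}"
    have "{Suc k..k + Suc n} = insert (Suc k) ?J"
      by auto
    with A have A_sets: "?A \<in> sets (PiM ?J (\<lambda>_. lborel))"
      by (intro sets_fun_upd_preimage) simp_all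
    have x: "0 < x" "x < cum_intensity a L \<sigma>"
      using elim True by auto
    have "emeasure (stream_space std_exponential)
        {s \<in> space (stream_space std_exponential). x ## s \<in> exit_event (Suc n) k (a, L) A}
        = emeasure (stream_space std_exponential) (exit_event n (Suc k) (?T, intensity a L ?T) ?A)"
      using exit_event_Cons[OF act x] step_active(1)[OF act x] by simp
    also have "\<dots> = path_mass_given_first n k (a, L) A ?T"
      unfolding emeasure_n[OF step_active(2)[OF act x] A_sets] path_mass_given_first_def fst_conv snd_conv
      by (intro nn_integral_cong) (simp add: indicator_def)
    finally show ?thesis
      using x by simp
  next
    case False
    then show ?thesis
      using exit_event_Cons_beyond[of a L x] act elim by (simp add: active_def)
  qed
qed

lemma emeasure_exit_event:
  assumes "active a L" "A \<in> sets (PiM {Suc k..k + n} (\<lambda>_. lborel))"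
  shows "emeasure (stream_space std_exponential) (exit_event n k (a, L) A)
    = (\<integral>\<^sup>+w. indicator A w * path_density n k (a, L) w \<partial>PiM {Suc k..k + n} (\<lambda>_. lborel))"
  using assms
proof (induction n arbitrary: k a L A)
  case 0
  then have "admissible a L"
    by (simp add: active_def)
  have "(\<integral>\<^sup>+w. g w \<partial>count_space {\<lambda>_. undefined}) = g (\<lambda>_. undefined)" for g :: "(nat \<Rightarrow> real) \<Rightarrow> ennreal"
    by (simp add: nn_integral_count_space_finite)
  with \<open>admissible a L\<close> show ?case
    by (simp add: emeasure_exit_event_0 PiM_empty)
next
  case (Suc n)
  interpret prob_space std_exponential by (rule prob_space_std_exponential)
  let ?S = "stream_space std_exponential" and ?X = "exit_event (Suc n) k (a, L) A"
  have "emeasure ?S ?X = (\<integral>\<^sup>+x. emeasure ?S {s \<in> space ?S. x ## s \<in> ?X} \<partial>std_exponential)"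
    by (rule emeasure_stream_space[OF sets_exit_event[OF Suc.prems(2)]])
  also have "\<dots> = (\<integral>\<^sup>+x. (if 0 < x \<and> x < cum_intensity a L \<sigma>
      then path_mass_given_first n k (a, L) A (first_passage a L x) else 0) \<partial>std_exponential)"
    by (intro nn_integral_cong_AE AE_emeasure_exit_event_Cons Suc.prems Suc.IH)
  also have "\<dots> = (\<integral>\<^sup>+t. indicator {a<..<\<sigma>} t * ennreal (intensity a L t * exp (- cum_intensity a L t)) *
      path_mass_given_first n k (a, L) A t \<partial>lborel)"
    by (rule nn_integral_first_passage[OF Suc.prems(1) borel_measurable_path_mass_given_first[OF Suc.prems(2)]])
  also have "\<dots> = (\<integral>\<^sup>+w. indicator A w * path_density (Suc n) k (a, L) w \<partial>PiM {Suc k..k + Suc n} (\<lambda>_. lborel))"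
    by (rule nn_integral_path_density_Suc[OF Suc.prems(2), symmetric])
  finally show ?case .
qed

subsection \<open>Closed form of the density\<close>

definition tree_length :: "(nat \<Rightarrow> real) \<Rightarrow> nat \<Rightarrow> real" where
  "tree_length t j = (\<Sum>i=1..j. incr f t i)"

definition bi_intensity :: "(nat \<Rightarrow> real) \<Rightarrow> nat \<Rightarrow> real \<Rightarrow> real" where
  "bi_intensity t n x = f x - fhat f (tt t (Ifun t n x)) x + tree_length t (Ifun t n x)"

lemma incr_eq:
  assumes "t \<in> ordered_times \<sigma> n" "i \<in> {1..n}"
  shows "incr f t i = f_ext (tt t i) - fhat f_ext (tt t (i - 1)) (tt t i)"
proof -
  have "i \<le> n" "i - 1 \<le> n"
    using assms(2) by auto
  from this[THEN tt_bounds[OF sigma_pos assms(1)]]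
  have "tt t i \<in> {0..\<sigma>}" "tt t (i - 1) \<in> {0..\<sigma>}"
    by auto
  then show ?thesis
    by (simp add: incr_def f_ext_eq fhat_ext_eq)
qed

lemma tree_length_nonneg: "t \<in> ordered_times \<sigma> n \<Longrightarrow> j \<le> n \<Longrightarrow> 0 \<le> tree_length t j"
  unfolding tree_length_def using incr_eq fhat_ext_le_self by (intro sum_nonneg) fastforce

lemma intensity_tree_length:
  "t \<in> ordered_times \<sigma> n \<Longrightarrow> m < n \<Longrightarrow>
    intensity (tt t m) (tree_length t m) (t (Suc m)) = tree_length t (Suc m)"
  using incr_eq[of t n "Suc m"] by (simp add: tree_length_def intensity_def tt_def)

lemma bi_intensity_eq:
  assumes t: "t \<in> ordered_times \<sigma> n" and "m \<le> n" "tt t m < x" "x \<le> \<sigma>" "m < n \<Longrightarrow> x \<le> t (Suc m)"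
  shows "bi_intensity t n x = intensity (tt t m) (tree_length t m) x"
proof -
  have "0 \<le> tt t m" "tt t m \<le> \<sigma>"
    using tt_bounds[OF sigma_pos t assms(2)] by auto
  with assms show ?thesis
    by (simp add: bi_intensity_def Ifun_eqI[OF t] intensity_def f_ext_eq fhat_ext_eq)
qed

lemma has_integral_bi_intensity_segment:
  assumes t: "t \<in> ordered_times \<sigma> n" and "m \<le> n" "tt t m \<le> e" "e \<le> \<sigma>" "m < n \<Longrightarrow> e \<le> t (Suc m)"
  shows "(bi_intensity t n has_integral cum_intensity (tt t m) (tree_length t m) e) {tt t m..e}"
proof (rule has_integral_spike[OF negligible_sing[of "tt t m"]])
  show "(intensity (tt t m) (tree_length t m) has_integral cum_intensity (tt t m) (tree_length t m) e) {tt t m..e}"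
    unfolding cum_intensity_def by (rule integrable_integral[OF intensity_integrable_on])
next
  fix x assume "x \<in> {tt t m..e} - {tt t m}"
  with assms(2-5) show "bi_intensity t n x = intensity (tt t m) (tree_length t m) x"
    by (intro bi_intensity_eq[OF t]) auto
qed

lemma path_density_closed_form:
  assumes t: "t \<in> ordered_times \<sigma> n" and "m + d = n"
  shows "\<exists>I. (bi_intensity t n has_integral I) {tt t m..\<sigma>} \<and>
    path_density d m (tt t m, tree_length t m) t = ennreal ((\<Prod>j\<in>{m<..n}. tree_length t j) * exp (- I))"
  using assms(2)
proof (induction d arbitrary: m)
  case 0
  then show ?case
    using has_integral_bi_intensity_segment[OF t, of m \<sigma>] tt_bounds[OF sigma_pos t, of m] by auto
next
  case (Suc d)
  define a b L where "a = tt t m" and "b = t (Suc m)" and "L = tree_length t m"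
  have "m < n"
    using Suc.prems by simp
  have b: "b = tt t (Suc m)" "a < b" "b < \<sigma>"
    using tt_less[OF t, of m "Suc m"] tt_bounds[OF sigma_pos t, of "Suc m"] \<open>m < n\<close>
    by (auto simp: a_def b_def tt_def)
  obtain I where I: "(bi_intensity t n has_integral I) {b..\<sigma>}"
    "path_density d (Suc m) (b, tree_length t (Suc m)) t = ennreal ((\<Prod>j\<in>{Suc m<..n}. tree_length t j) * exp (- I))"
    using Suc.IH[of "Suc m"] Suc.prems by (auto simp: b)
  have "(bi_intensity t n has_integral cum_intensity a L b) {a..b}"
    using has_integral_bi_intensity_segment[OF t, of m b] \<open>m < n\<close> b by (simp add: a_def L_def b_def)
  then have "(bi_intensity t n has_integral cum_intensity a L b + I) {a..\<sigma>}"
    using b by (intro has_integral_combine[OF _ _ _ I(1)]) auto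
  moreover have "{m<..n} = insert (Suc m) {Suc m<..n}"
    using \<open>m < n\<close> by auto
  moreover have "0 \<le> (\<Prod>j\<in>{Suc m<..n}. tree_length t j)" "0 \<le> tree_length t (Suc m)"
    using tree_length_nonneg[OF t] \<open>m < n\<close> by (auto intro: prod_nonneg)
  moreover have "intensity a L b = tree_length t (Suc m)"
    using intensity_tree_length[OF t \<open>m < n\<close>] by (simp add: a_def L_def b_def)
  ultimately show ?case
    using I(2) b by (intro exI[of _ "cum_intensity a L b + I"] conjI)
      (simp_all add: a_def [symmetric] L_def [symmetric] b_def [symmetric] mult_exp_exp flip: ennreal_mult)
qed

lemma path_density_eq_bi_density:
  assumes "t \<in> ordered_times \<sigma> n"
  shows "path_density n 0 (0, 0) t = ennreal (bi_density f \<sigma> n t)"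
proof -
  obtain I where "(bi_intensity t n has_integral I) {0..\<sigma>}"
    "path_density n 0 (0, 0) t = ennreal ((\<Prod>j\<in>{0<..n}. tree_length t j) * exp (- I))"
    using path_density_closed_form[OF assms, of 0 n] by (auto simp: tt_def tree_length_def)
  moreover have "{0<..n} = {1..n}"
    by auto
  ultimately show ?thesis
    by (simp add: bi_density_def tree_length_def bi_intensity_def[abs_def] integral_unique)
qed

lemma path_density_nonzero:
  "path_density d m (a, L) t \<noteq> 0 \<Longrightarrow> (0 < d \<longrightarrow> a < t (Suc m)) \<and>
    (\<forall>i. Suc m \<le> i \<and> i \<le> m + d \<longrightarrow> t i < \<sigma>) \<and> (\<forall>i. Suc m \<le> i \<and> i < m + d \<longrightarrow> t i < t (Suc i))"
proof (induction d arbitrary: m a L)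
  case (Suc d)
  have step: "a < t (Suc m)" "t (Suc m) < \<sigma>"
    "path_density d (Suc m) (t (Suc m), intensity a L (t (Suc m))) t \<noteq> 0"
    using Suc.prems by (auto split: split_indicator_asm)
  note IH = Suc.IH[OF step(3)]
  show ?case
  proof (intro conjI allI impI)
    fix i assume "Suc m \<le> i \<and> i \<le> m + Suc d"
    then show "t i < \<sigma>"
      using IH step(2) by (cases "i = Suc m") auto
  next
    fix i assume "Suc m \<le> i \<and> i < m + Suc d"
    then show "t i < t (Suc i)"
      using IH by (cases "i = Suc m") auto
  qed (rule step(1))
qed simp

lemma path_density_vanishes: "t \<notin> ordered_times \<sigma> n \<Longrightarrow> path_density n 0 (0, 0) t = 0"
proof (rule ccontr)
  assume "t \<notin> ordered_times \<sigma> n" "path_density n 0 (0, 0) t \<noteq> 0"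
  note nonzero = path_density_nonzero[OF this(2)]
  have "0 < t i" if "i \<in> {1..n}" for i
    using that
  proof (induction i)
    case (Suc i)
    show ?case
    proof (cases "i = 0")
      case False
      with Suc.prems have "0 < t i" "t i < t (Suc i)"
        using Suc.IH nonzero by auto
      then show ?thesis
        by simp
    qed (use Suc.prems nonzero in simp)
  qed simp
  then have "t \<in> ordered_times \<sigma> n"
    using nonzero by (auto simp: ordered_times_def)
  with \<open>t \<notin> ordered_times \<sigma> n\<close> show False
    by contradiction
qed

lemma indicator_path_density_eq:
  "indicator A t * path_density n 0 (0, 0) t
    = indicator (A \<inter> ordered_times \<sigma> n) t * ennreal (bi_density f \<sigma> n t)"
  by (cases "t \<in> ordered_times \<sigma> n")
    (auto simp: path_density_eq_bi_density path_density_vanishes indicator_def)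

subsection \<open>The chain dies almost surely\<close>

lemma cum_intensity_le:
  assumes "\<And>x. f_ext x \<le> B" "a \<le> t"
  shows "cum_intensity a L t \<le> (L + B) * (t - a)"
proof -
  have "cum_intensity a L t \<le> integral {a..t} (\<lambda>x. L + B)"
    unfolding cum_intensity_def by (rule integral_le[OF intensity_integrable_on]) (auto intro: intensity_le assms(1))
  with assms(2) show ?thesis
    by (simp add: mult.commute)
qed

text \<open>Step \<open>j\<close> uses up an exponential variable \<open>x \<le> (L + B) (s\<^sub>j\<^sub>+\<^sub>1 - s\<^sub>j) \<le> (j + 1) B (s\<^sub>j\<^sub>+\<^sub>1 - s\<^sub>j)\<close>,
  so surviving \<open>i\<close> steps forces \<open>\<Sum>\<^sub>j\<^sub><\<^sub>i x\<^sub>j / (j + 1) \<le> B \<sigma>\<close>, an event of probability \<open>O(1 / i)\<close>.\<close>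

lemma chain_alive_bound:
  assumes B: "\<And>x. f_ext x \<le> B"
  shows "fst (chain (0, 0) s i) \<le> \<sigma> \<Longrightarrow>
    snd (chain (0, 0) s i) \<le> real i * B \<and> (\<Sum>j<i. s !! j / (real j + 1)) \<le> B * fst (chain (0, 0) s i)"
proof (induction i)
  case (Suc i)
  have adm0: "admissible (fst (0::real, 0::real)) (snd (0::real, 0::real))"
    by (simp add: admissible_def)
  obtain a L where q: "chain (0, 0) s i = (a, L)"
    by (cases "chain (0, 0) s i")
  have alive: "fst (chain (0, 0) s i) \<le> \<sigma>"
    by (rule chain_alive_Suc[OF adm0 Suc.prems])
  then have adm: "admissible a L" and IH: "L \<le> real i * B" "(\<Sum>j<i. s !! j / (real j + 1)) \<le> B * a"
    using chain_alive_iff_admissible[OF adm0, of s i] Suc.IH q by auto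
  define x where "x = s !! i"
  have x: "x \<le> cum_intensity a L \<sigma>"
    using Suc.prems step_beyond[OF adm, of x] sigma_pos by (force simp: q x_def)
  define t where "t = first_passage a L x"
  have step: "chain (0, 0) s (Suc i) = (t, intensity a L t)"
    using q adm x by (simp add: step_def x_def t_def)
  have t: "a \<le> t" "x \<le> cum_intensity a L t"
    using first_passage_in[OF adm x] cum_intensity_first_passage[OF adm x] by (auto simp: t_def)
  have "x \<le> (L + B) * (t - a)"
    using t cum_intensity_le[OF B t(1), of L] by simp
  also have "\<dots> \<le> (real i + 1) * B * (t - a)"
    using IH t by (intro mult_right_mono) (auto simp: algebra_simps)
  finally have "x / (real i + 1) \<le> B * (t - a)"
    by (simp add: divide_le_eq mult_ac)
  with IH have "(\<Sum>j<Suc i. s !! j / (real j + 1)) \<le> B * t"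
    by (simp add: x_def algebra_simps)
  moreover have "intensity a L t \<le> real (Suc i) * B"
    using intensity_le[OF B, of a L t] IH by (simp add: algebra_simps)
  ultimately show ?case
    unfolding step by simp
qed simp

lemma AE_chain_dies: "AE s in stream_space std_exponential. \<exists>i. \<sigma> < fst (chain (0, 0) s i)"
proof -
  let ?S = "stream_space std_exponential"
  define N where "N = {s \<in> space ?S. \<forall>i. fst (chain (0, 0) s i) \<le> \<sigma>}"
  have N [measurable]: "N \<in> sets ?S"
    unfolding N_def by measurable
  obtain B where B: "0 < B" "\<And>x. f_ext x \<le> B"
    using f_ext_bounded by metis
  define C where "C = exp (B * \<sigma>)"
  have bound: "emeasure ?S N \<le> ennreal (C * inverse (real (Suc i)))" for i
  proof -
    have "indicator N s \<le> ennreal C * ennreal (exp (- (\<Sum>j<i. s !! j / (real j + 1))))" for s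
    proof (cases "s \<in> N")
      case True
      then have "(\<Sum>j<i. s !! j / (real j + 1)) \<le> B * \<sigma>"
        using chain_alive_bound[OF B(2), of s i] B(1) by (auto simp: N_def intro: order.trans)
      then have "ennreal 1 \<le> ennreal (C * exp (- (\<Sum>j<i. s !! j / (real j + 1))))"
        by (intro ennreal_leI) (simp add: C_def mult_exp_exp)
      with True show ?thesis
        by (simp add: C_def ennreal_mult)
    qed simp
    then have "emeasure ?S N \<le> (\<integral>\<^sup>+s. ennreal C * ennreal (exp (- (\<Sum>j<i. s !! j / (real j + 1)))) \<partial>?S)"
      by (simp add: nn_integral_mono flip: nn_integral_indicator)
    also have "\<dots> = ennreal C * ennreal (1 / (1 + real i))"
      using nn_integral_exp_weighted_sum_stream[of 1 i] by (simp add: nn_integral_cmult)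
    finally show ?thesis
      by (simp add: C_def add.commute divide_inverse flip: ennreal_mult)
  qed
  have "(\<lambda>i. ennreal (C * inverse (real (Suc i)))) \<longlonglongrightarrow> ennreal (C * 0)"
    by (intro tendsto_ennrealI tendsto_mult tendsto_const LIMSEQ_inverse_real_of_nat)
  then have "emeasure ?S N \<le> 0"
    using bound by (intro LIMSEQ_le_const) auto
  then have "N \<in> null_sets ?S"
    by (simp add: null_sets_def)
  then show ?thesis
    by (rule AE_I') (auto simp: N_def not_less)
qed

subsection \<open>Agreement with the construction\<close>

lemma first_point_eq_step:
  assumes adm: "admissible a L"
  shows "map_option (\<lambda>s. (s, L + f s - fhat f a s)) (first_point (\<lambda>t. L + f t - fhat f a t) a \<sigma> x)
    = (if fst (step (a, L) x) \<le> \<sigma> then Some (step (a, L) x) else None)"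
proof -
  have bounds: "0 \<le> a" "a \<le> \<sigma>" "0 \<le> L"
    using admissible_bounds[OF adm] by auto
  have intensity: "L + f t - fhat f a t = intensity a L t" if "t \<in> {a..\<sigma>}" for t
    using that bounds by (simp add: intensity_def f_ext_eq fhat_ext_eq)
  have cum: "integral {a..t} (\<lambda>t. L + f t - fhat f a t) = cum_intensity a L t" if "t \<in> {a..\<sigma>}" for t
    unfolding cum_intensity_def by (rule integral_cong) (use that intensity in auto)
  have ex: "(\<exists>t\<in>{a..\<sigma>}. x \<le> integral {a..t} (\<lambda>t. L + f t - fhat f a t)) \<longleftrightarrow> x \<le> cum_intensity a L \<sigma>"
    using cum cum_intensity_mono[OF bounds(3), of a _ \<sigma>] bounds by (force intro: order.trans)
  show ?thesis
  proof (cases "x \<le> cum_intensity a L \<sigma>")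
    case True
    have "first_point (\<lambda>t. L + f t - fhat f a t) a \<sigma> x = Some (first_passage a L x)"
      using True ex cum unfolding first_point_def first_passage_def by (auto intro!: arg_cong[where f=Inf])
    then show ?thesis
      using True adm first_passage_in[OF adm True] intensity by (simp add: step_def)
  next
    case False
    then show ?thesis
      using ex sigma_pos by (simp add: first_point_def step_def)
  qed
qed

lemma bi_state_eq_chain:
  "bi_state f \<sigma> (snth s) i
    = (if fst (chain (0, 0) (stl s) i) \<le> \<sigma> then Some (chain (0, 0) (stl s) i) else None)"
proof (induction i)
  case (Suc i)
  have adm0: "admissible (fst (0::real, 0::real)) (snd (0::real, 0::real))"
    by (simp add: admissible_def)
  show ?case
  proof (cases "fst (chain (0, 0) (stl s) i) \<le> \<sigma>")
    case True
    obtain a L where q: "chain (0, 0) (stl s) i = (a, L)"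
      by (cases "chain (0, 0) (stl s) i")
    have "admissible a L"
      using chain_alive_iff_admissible[OF adm0, of "stl s" i] True q by simp
    with Suc.IH True q show ?thesis
      by (simp add: first_point_eq_step)
  next
    case False
    then have "\<not> fst (chain (0, 0) (stl s) (Suc i)) \<le> \<sigma>"
      using chain_alive_Suc[OF adm0] by blast
    with Suc.IH False show ?thesis
      by simp
  qed
qed (use sigma_pos in simp)

lemma AE_exit_event_iff:
  "AE s in stream_space std_exponential.
    ((LEAST i. \<sigma> < fst (chain (0, 0) s (Suc i))) = n \<and>
      (\<lambda>i\<in>{1..n}. if fst (chain (0, 0) s i) \<le> \<sigma> then fst (chain (0, 0) s i) else c) \<in> A)
    \<longleftrightarrow> s \<in> exit_event n 0 (0, 0) A"
  using AE_chain_dies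
proof eventually_elim
  case (elim s)
  define alive where "alive i \<longleftrightarrow> fst (chain (0, 0) s i) \<le> \<sigma>" for i
  have adm0: "admissible (fst (0::real, 0::real)) (snd (0::real, 0::real))"
    by (simp add: admissible_def)
  have "alive i" if "alive (Suc i)" for i
    using chain_alive_Suc[OF adm0] that by (simp add: alive_def)
  moreover have "alive 0" "\<exists>i. \<not> alive i"
    using sigma_pos elim by (auto simp: alive_def not_le)
  ultimately have "(LEAST i. \<not> alive (Suc i)) = n \<longleftrightarrow> alive n \<and> \<not> alive (Suc n)"
    by (rule Least_not_Suc_eq_iff)
  moreover have "(\<lambda>i\<in>{1..n}. if alive i then fst (chain (0, 0) s i) else c)
      = (\<lambda>i\<in>{Suc 0..0 + n}. fst (chain (0, 0) s (i - 0)))" if "alive n"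
    using chain_alive_mono[OF adm0 _ that[unfolded alive_def]] by (auto simp: alive_def)
  ultimately show ?case
    by (auto simp: exit_event_def alive_def not_le)
qed

lemma emeasure_bi_event:
  assumes A [measurable]: "A \<in> sets (PiM {1..n} (\<lambda>_. lborel))"
  defines "X \<equiv> {s \<in> space (stream_space std_exponential).
    bi_N f \<sigma> (snth s) = n \<and> (\<lambda>i\<in>{1..n}. bi_time f \<sigma> (snth s) i) \<in> A}"
  shows "X \<in> sets (stream_space std_exponential)"
    and "emeasure (stream_space std_exponential) X
      = (\<integral>\<^sup>+t. indicator (A \<inter> ordered_times \<sigma> n) t * ennreal (bi_density f \<sigma> n t) \<partial>PiM {1..n} (\<lambda>_. lborel))"
proof -
  let ?S = "stream_space std_exponential"
  define junk where "junk = fst (the (None :: (real \<times> real) option))"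
  define times where
    "times s = (\<lambda>i\<in>{1..n}. if fst (chain (0, 0) s i) \<le> \<sigma> then fst (chain (0, 0) s i) else junk)" for s
  define Q where "Q = {s \<in> space ?S. (LEAST i. \<sigma> < fst (chain (0, 0) s (Suc i))) = n \<and> times s \<in> A}"
  have [measurable]: "times \<in> measurable ?S (PiM {1..n} (\<lambda>_. lborel))"
    unfolding times_def by (rule measurable_restrict) simp
  have Q [measurable]: "Q \<in> sets ?S"
    unfolding Q_def by measurable
  have "bi_time f \<sigma> (snth s) i = (if fst (chain (0, 0) (stl s) i) \<le> \<sigma> then fst (chain (0, 0) (stl s) i) else junk)"
    for s i
    by (simp add: bi_time_def bi_state_eq_chain junk_def)
  moreover have "bi_N f \<sigma> (snth s) = (LEAST i. \<sigma> < fst (chain (0, 0) (stl s) (Suc i)))" for s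
    unfolding bi_N_def bi_state_eq_chain by (simp add: not_le)
  ultimately have X_eq: "X = {s \<in> space ?S. stl s \<in> Q}"
    by (simp add: X_def Q_def times_def cong: restrict_cong)
  show "X \<in> sets ?S"
    unfolding X_eq by measurable
  have "exit_event n 0 (0, 0) A \<in> sets ?S"
    using sets_exit_event[of A 0 n] A by simp
  with AE_exit_event_iff[of n junk A] have "emeasure ?S Q = emeasure ?S (exit_event n 0 (0, 0) A)"
    by (intro emeasure_eq_AE Q) (simp_all add: Q_def times_def)
  also have "\<dots> = (\<integral>\<^sup>+w. indicator A w * path_density n 0 (0, 0) w \<partial>PiM {1..n} (\<lambda>_. lborel))"
    using emeasure_exit_event[of 0 0 A 0 n] A sigma_pos by (simp add: active_def admissible_def)
  finally show "emeasure ?S X = (\<integral>\<^sup>+t. indicator (A \<inter> ordered_times \<sigma> n) t * ennreal (bi_density f \<sigma> n t)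
      \<partial>PiM {1..n} (\<lambda>_. lborel))"
    using prob_space.emeasure_stream_space_stl[OF prob_space_std_exponential Q]
    by (simp add: X_eq indicator_path_density_eq)
qed

end

theorem lemma3p2:
  fixes \<sigma> :: real and f :: "real \<Rightarrow> real" and M :: "'a measure"
    and E :: "nat \<Rightarrow> 'a \<Rightarrow> real" and n :: nat and A :: "(nat \<Rightarrow> real) set"
  assumes "0 < \<sigma>" and "excursion \<sigma> f"
    and "prob_space M"
    and "prob_space.indep_vars M (\<lambda>_. borel) E UNIV"
    and "\<And>i. distributed M lborel (E i) (exponential_density 1)"
    and "A \<in> sets (PiM {1..n} (\<lambda>_. lborel))"
  shows "emeasure M {\<omega>\<in>space M. bi_N f \<sigma> (\<lambda>i. E i \<omega>) = n \<and>
            (\<lambda>i\<in>{1..n}. bi_time f \<sigma> (\<lambda>i. E i \<omega>) i) \<in> A}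
         = (\<integral>\<^sup>+ t. indicator (A \<inter> ordered_times \<sigma> n) t * ennreal (bi_density f \<sigma> n t)
              \<partial>(PiM {1..n} (\<lambda>_. lborel)))"
proof -
  interpret excursion_fun \<sigma> f
    using assms(1,2) by unfold_locales
  interpret prob_space M
    by fact
  note bi_event = emeasure_bi_event[OF assms(6)]
  have "emeasure M {\<omega>\<in>space M. bi_N f \<sigma> (\<lambda>i. E i \<omega>) = n \<and> (\<lambda>i\<in>{1..n}. bi_time f \<sigma> (\<lambda>i. E i \<omega>) i) \<in> A}
      = emeasure (stream_space std_exponential) {s \<in> space (stream_space std_exponential).
          bi_N f \<sigma> (snth s) = n \<and> (\<lambda>i\<in>{1..n}. bi_time f \<sigma> (snth s) i) \<in> A}"
    using assms(4) distributed_exponential1_distr[OF assms(5)] sets_std_exponential bi_event(1)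
    by (rule emeasure_indep_vars_stream)
  with bi_event(2) show ?thesis
    by simp
qed

end
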